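(* Let $(G,\mathcal{C})$ be a 2-colored graph, $G=(V,E)$. Then: (i) the extreme rays of the alternating cone $\mathcal{A}(G,\mathcal{C})$ are (the rays spanned by) the characteristic vectors of the alternating cycles and the alternating bicycles in $(G,\mathcal{C})$; (ii) every integral vector in $\mathcal{A}(G,\mathcal{C})$ is a nonnegative integral combination of characteristic vectors of irreducible CAW's; (iii) every $\{0,1\}$-vector in $\mathcal{A}(G,\mathcal{C})$ is a nonnegative integral combination of characteristic vectors of irreducible CAT's; (iv) the characteristic vector of an irreducible CAW is $\{0,1,2\}$-valued.
   Context: Graphs are finite, undirected, may have parallel edges but no loops. A 2-colored graph $(G,\mathcal{C})$ is a graph $G=(V,E)$ with a coloring $\mathcal{C}:E\to\{R,B\}$ (red/blue). The alternating cone $\mathcal{A}(G,\mathcal{C})\subseteq\mathbb{R}^E$ is the set of $x$ with $x(e)\ge0$ for all $e$ and, at every vertex $v$, $\sum_{e\text{ red},\,e\ni v}x(e)=\sum_{e\text{ blue},\,e\ni v}x(e)$. A walk is a sequence $W=(v_0,e_1,v_1,\dots,e_m,v_m)$, $m\ge0$, with $e_j$ having endpoints $v_{j-1},v_j$; its characteristic vector is $\chi(W)=\sum_{i=1}^m\chi(e_i)$, where $\chi(e)$ is the unit vector of $e$ in $\mathbb{R}^E$. $W$ is closed if $v_0=v_m$; a trail if $e_1,\dots,e_m$ are distinct; a path if moreover $v_0,\dots,v_m$ are distinct; a cycle if closed, edges distinct and $v_0,\dots,v_{m-1}$ distinct. $W$ is internally alternating if $\mathcal{C}(e_j)\ne\mathcal{C}(e_{j+1})$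 for $j=1,\dots,m-1$; alternating if internally alternating and, when closed, also $\mathcal{C}(e_m)\ne\mathcal{C}(e_1)$. A CAW (resp. CAT) is a closed alternating walk (resp. trail). An (even) alternating cycle is a cycle of even length that is alternating. An odd internally alternating cycle with base $v_0$ is a $v_0$-$v_0$ cycle of odd length that is internally alternating. An alternating bicycle is an alternating walk of the form $W_1*P*W_2*P^R$ where $W_1,W_2$ are odd internally alternating cycles, $P$ is a path between their bases (possibly empty if the bases coincide), the internal vertices of $W_1$, $P$, $W_2$ are disjoint, $*$ denotes concatenation and $P^R$ is the reversal of $P$. A CAW $W$ is irreducible if $\chi(W)\ne\chi(W_1)+\chi(W_2)$ for all CAW's $W_1,W_2$; a CAT $T$ is irreducible if $\chi(T)\ne\chi(T_1)+\chi(T_2)$ for all CAT's $T_1,T_2$. *)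

theory Defs
  imports Complex_Main
begin

datatype color = R | B

text \<open>A 2-colored multigraph without loops: vertex set V, edge set E, each edge e has an
  endpoint set ends e consisting of exactly two vertices of V; col is the red/blue colouring.
  Vectors in R^E are functions 'e => real vanishing outside E.\<close>

definition two_colored_graph :: "'v set \<Rightarrow> 'e set \<Rightarrow> ('e \<Rightarrow> 'v set) \<Rightarrow> ('e \<Rightarrow> color) \<Rightarrow> bool" where
  "two_colored_graph V E ends col \<longleftrightarrow>
     finite V \<and> finite E \<and> (\<forall>e\<in>E. ends e \<subseteq> V \<and> card (ends e) = 2)"

definition alt_cone :: "'v set \<Rightarrow> 'e set \<Rightarrow> ('e \<Rightarrow> 'v set) \<Rightarrow> ('e \<Rightarrow> color) \<Rightarrow> ('e \<Rightarrow> real) set" where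
  "alt_cone V E ends col = {x. (\<forall>e\<in>E. x e \<ge> 0) \<and> (\<forall>e. e \<notin> E \<longrightarrow> x e = 0) \<and>
     (\<forall>v\<in>V. (\<Sum>e\<in>{e\<in>E. v \<in> ends e \<and> col e = R}. x e) = (\<Sum>e\<in>{e\<in>E. v \<in> ends e \<and> col e = B}. x e))}"

definition ray :: "('e \<Rightarrow> real) \<Rightarrow> ('e \<Rightarrow> real) set" where
  "ray x = {(\<lambda>e. t * x e) | t. t \<ge> 0}"

definition spans_extreme_ray :: "('e \<Rightarrow> real) set \<Rightarrow> ('e \<Rightarrow> real) \<Rightarrow> bool" where
  "spans_extreme_ray K x \<longleftrightarrow> x \<in> K \<and> x \<noteq> (\<lambda>e. 0) \<and>
     (\<forall>y z. y \<in> K \<longrightarrow> z \<in> K \<longrightarrow> (\<lambda>e. y e + z e) \<in> ray x \<longrightarrow> y \<in> ray x \<and> z \<in> ray x)"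

text \<open>A walk (v_0,e_1,v_1,...,e_m,v_m) is represented as the pair (vertex list, edge list).\<close>
type_synonym ('v,'e) walk = "'v list \<times> 'e list"

definition walk :: "'v set \<Rightarrow> 'e set \<Rightarrow> ('e \<Rightarrow> 'v set) \<Rightarrow> ('v,'e) walk \<Rightarrow> bool" where
  "walk V E ends W \<longleftrightarrow> length (fst W) = Suc (length (snd W)) \<and> set (fst W) \<subseteq> V \<and>
     (\<forall>j < length (snd W). snd W ! j \<in> E \<and> ends (snd W ! j) = {fst W ! j, fst W ! Suc j})"

definition chi :: "('v,'e) walk \<Rightarrow> 'e \<Rightarrow> real" where
  "chi W = (\<lambda>e. real (count_list (snd W) e))"

definition closed_walk :: "('v,'e) walk \<Rightarrow> bool" where
  "closed_walk W \<longleftrightarrow> hd (fst W) = last (fst W)"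

definition trail :: "('v,'e) walk \<Rightarrow> bool" where
  "trail W \<longleftrightarrow> distinct (snd W)"

definition path :: "('v,'e) walk \<Rightarrow> bool" where
  "path W \<longleftrightarrow> distinct (snd W) \<and> distinct (fst W)"

definition cycle :: "('v,'e) walk \<Rightarrow> bool" where
  "cycle W \<longleftrightarrow> closed_walk W \<and> distinct (snd W) \<and> distinct (butlast (fst W)) \<and> snd W \<noteq> []"

definition int_alternating :: "('e \<Rightarrow> color) \<Rightarrow> ('v,'e) walk \<Rightarrow> bool" where
  "int_alternating col W \<longleftrightarrow> (\<forall>j. Suc j < length (snd W) \<longrightarrow> col (snd W ! j) \<noteq> col (snd W ! Suc j))"

definition alternating :: "('e \<Rightarrow> color) \<Rightarrow> ('v,'e) walk \<Rightarrow> bool" where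
  "alternating col W \<longleftrightarrow> int_alternating col W \<and>
     (closed_walk W \<and> snd W \<noteq> [] \<longrightarrow> col (last (snd W)) \<noteq> col (hd (snd W)))"

definition CAW :: "'v set \<Rightarrow> 'e set \<Rightarrow> ('e \<Rightarrow> 'v set) \<Rightarrow> ('e \<Rightarrow> color) \<Rightarrow> ('v,'e) walk \<Rightarrow> bool" where
  "CAW V E ends col W \<longleftrightarrow> walk V E ends W \<and> closed_walk W \<and> alternating col W \<and> snd W \<noteq> []"

definition CAT :: "'v set \<Rightarrow> 'e set \<Rightarrow> ('e \<Rightarrow> 'v set) \<Rightarrow> ('e \<Rightarrow> color) \<Rightarrow> ('v,'e) walk \<Rightarrow> bool" where
  "CAT V E ends col W \<longleftrightarrow> CAW V E ends col W \<and> trail W"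

definition alt_cycle :: "'v set \<Rightarrow> 'e set \<Rightarrow> ('e \<Rightarrow> 'v set) \<Rightarrow> ('e \<Rightarrow> color) \<Rightarrow> ('v,'e) walk \<Rightarrow> bool" where
  "alt_cycle V E ends col W \<longleftrightarrow> walk V E ends W \<and> cycle W \<and> even (length (snd W)) \<and> alternating col W"

definition odd_ia_cycle :: "'v set \<Rightarrow> 'e set \<Rightarrow> ('e \<Rightarrow> 'v set) \<Rightarrow> ('e \<Rightarrow> color) \<Rightarrow> ('v,'e) walk \<Rightarrow> 'v \<Rightarrow> bool" where
  "odd_ia_cycle V E ends col W v0 \<longleftrightarrow> walk V E ends W \<and> cycle W \<and> odd (length (snd W)) \<and>
     int_alternating col W \<and> hd (fst W) = v0"

definition walk_concat :: "('v,'e) walk \<Rightarrow> ('v,'e) walk \<Rightarrow> ('v,'e) walk" where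
  "walk_concat W1 W2 = (fst W1 @ tl (fst W2), snd W1 @ snd W2)"

definition walk_rev :: "('v,'e) walk \<Rightarrow> ('v,'e) walk" where
  "walk_rev W = (rev (fst W), rev (snd W))"

definition alt_bicycle :: "'v set \<Rightarrow> 'e set \<Rightarrow> ('e \<Rightarrow> 'v set) \<Rightarrow> ('e \<Rightarrow> color) \<Rightarrow> ('v,'e) walk \<Rightarrow> bool" where
  "alt_bicycle V E ends col W \<longleftrightarrow>
     (\<exists>W1 P W2 u w.
        odd_ia_cycle V E ends col W1 u \<and> odd_ia_cycle V E ends col W2 w \<and>
        walk V E ends P \<and> path P \<and> hd (fst P) = u \<and> last (fst P) = w \<and>
        set (fst W1) \<inter> set (fst P) = {u} \<and> set (fst P) \<inter> set (fst W2) = {w} \<and>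
        set (fst W1) \<inter> set (fst W2) \<subseteq> {u} \<inter> {w} \<and>
        W = walk_concat (walk_concat (walk_concat W1 P) W2) (walk_rev P) \<and>
        walk V E ends W \<and> alternating col W)"

definition irreducible_CAW :: "'v set \<Rightarrow> 'e set \<Rightarrow> ('e \<Rightarrow> 'v set) \<Rightarrow> ('e \<Rightarrow> color) \<Rightarrow> ('v,'e) walk \<Rightarrow> bool" where
  "irreducible_CAW V E ends col W \<longleftrightarrow> CAW V E ends col W \<and>
     \<not> (\<exists>W1 W2. CAW V E ends col W1 \<and> CAW V E ends col W2 \<and> chi W = (\<lambda>e. chi W1 e + chi W2 e))"

definition irreducible_CAT :: "'v set \<Rightarrow> 'e set \<Rightarrow> ('e \<Rightarrow> 'v set) \<Rightarrow> ('e \<Rightarrow> color) \<Rightarrow> ('v,'e) walk \<Rightarrow> bool" where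
  "irreducible_CAT V E ends col T \<longleftrightarrow> CAT V E ends col T \<and>
     \<not> (\<exists>T1 T2. CAT V E ends col T1 \<and> CAT V E ends col T2 \<and> chi T = (\<lambda>e. chi T1 e + chi T2 e))"

end

theory Submission
  imports Defs
begin

(* Along a closed alternating walk each visit of a vertex contributes one red and one blue edge,
   so characteristic vectors of closed alternating walks lie in the cone. Conversely, in an
   integral vector of the cone an alternating walk can always be continued by an edge of the
   other colour until it closes up alternately (the balance at its end vertex is violated
   otherwise); subtracting such walks decomposes the vector, and reducible walks are split
   further. Of three traversals of one edge two leave from the same endpoint, and an
   irreducible walk cannot be split there.

   The support of a vector of the cone offers an edge of the other colour at both ends of each
   of its edges. Growing an alternating path inside it closes either an even alternating cycle
   or an odd cycle; growing a second path from the base of an odd cycle closes an even cycle or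
   a second odd cycle, which together with the path forms an alternating bicycle. On a cycle or
   bicycle the balance conditions determine a supported cone vector up to a factor, so these
   span extreme rays; and an extreme vector minus a small multiple of a circuit in its support
   stays in the cone, so it is a multiple of that circuit. *)

section \<open>Walks and alternation\<close>

lemma color_neq_neqD: "(a::color) \<noteq> b \<Longrightarrow> b \<noteq> c \<Longrightarrow> a = c"
  by (cases a; cases b; cases c) auto

lemma in_set_drop_conv_nth: "x \<in> set (drop i xs) \<longleftrightarrow> (\<exists>j. i \<le> j \<and> j < length xs \<and> xs ! j = x)"
proof
  assume "x \<in> set (drop i xs)"
  then obtain k where "k < length (drop i xs)" "drop i xs ! k = x" by (auto simp: in_set_conv_nth)
  then show "\<exists>j. i \<le> j \<and> j < length xs \<and> xs ! j = x" by (intro exI[of _ "i + k"]) auto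
next
  assume "\<exists>j. i \<le> j \<and> j < length xs \<and> xs ! j = x"
  then obtain j where "i \<le> j" "j < length xs" "xs ! j = x" by blast
  then show "x \<in> set (drop i xs)" by (auto simp: in_set_conv_nth intro!: exI[of _ "j - i"])
qed

lemma count_list_distinct: "distinct xs \<Longrightarrow> count_list xs x = (if x \<in> set xs then 1 else 0)"
  by (induction xs) auto

lemma distinct_if_count_list_le_1: "(\<And>x. count_list xs x \<le> 1) \<Longrightarrow> distinct xs"
proof (induction xs)
  case (Cons a xs)
  have "count_list xs x \<le> 1" for x using Cons.prems[of x] by (simp split: if_splits)
  moreover have "a \<notin> set xs" using Cons.prems[of a] by (simp add: count_list_0_iff[symmetric])
  ultimately show ?case using Cons.IH by simp
qed simp

lemma count_list_ge_3_nth: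
  assumes "count_list xs x \<ge> 3"
  obtains i j k where "i < j" "j < k" "k < length xs" "xs ! i = x" "xs ! j = x" "xs ! k = x"
proof -
  obtain n where "count_list xs x = 3 + n" using le_Suc_ex[OF assms] by blast
  then have "count_list xs x = Suc (Suc (Suc n))" by simp
  then obtain p1 p2 p3 r where "xs = p1 @ x # p2 @ x # p3 @ x # r"
    by (metis count_list_Suc_split_first)
  then show ?thesis
    by (intro that[of "length p1" "length p1 + Suc (length p2)" "length p1 + Suc (length p2) + Suc (length p3)"])
      (simp_all add: nth_append)
qed

lemma distinct_tl_if_closed:
  assumes "hd xs = last xs" "2 \<le> length xs" "distinct (butlast xs)"
  shows "distinct (tl xs)"
proof -
  obtain a ys where xs: "xs = a # ys" "ys \<noteq> []" using assms(2) by (cases xs) (auto simp: Suc_le_eq)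
  then obtain zs where "ys = zs @ [a]" using assms(1) by (metis append_butlast_last_id last_ConsR list.sel(1))
  then show ?thesis using assms(3) xs by simp
qed

lemma nonneg_Ints_eq_real_nat: "(r::real) \<in> \<int> \<Longrightarrow> 0 \<le> r \<Longrightarrow> \<exists>n. r = real n"
  by (metis Ints_cases of_int_0_le_iff of_nat_nat)

lemma walk_Pair_iff: "walk V E ends (vs, es) \<longleftrightarrow> length vs = Suc (length es) \<and> set vs \<subseteq> V \<and>
     (\<forall>j < length es. es ! j \<in> E \<and> ends (es ! j) = {vs ! j, vs ! Suc j})"
  by (simp add: walk_def)

lemma walk_length: "walk V E ends (vs, es) \<Longrightarrow> length vs = Suc (length es)"
  by (simp add: walk_Pair_iff)

lemma walk_vertices: "walk V E ends (vs, es) \<Longrightarrow> set vs \<subseteq> V"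
  by (simp add: walk_Pair_iff)

lemma walk_nth_ends: "walk V E ends (vs, es) \<Longrightarrow> j < length es \<Longrightarrow> ends (es ! j) = {vs ! j, vs ! Suc j}"
  by (simp add: walk_Pair_iff)

lemma walk_last_conv_nth: "walk V E ends (vs, es) \<Longrightarrow> last vs = vs ! length es"
  by (metis diff_Suc_1 last_conv_nth length_0_conv nat.distinct(1) walk_length)

lemma walk_nonempty: "walk V E ends W \<Longrightarrow> fst W \<noteq> []"
  by (cases W) (auto dest: walk_length)

lemma walk_edge_mem: assumes "walk V E ends (vs, es)" "e \<in> set es"
  shows "e \<in> E" "ends e \<subseteq> set vs"
proof -
  obtain j where "j < length es" "es ! j = e" using assms(2) by (auto simp: in_set_conv_nth)
  then show "e \<in> E" "ends e \<subseteq> set vs"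
    using assms(1) walk_length[OF assms(1)] by (auto simp: walk_Pair_iff)
qed

lemma walk_edges_at_vertex_notin: "walk V E ends (vs, es) \<Longrightarrow> v \<notin> set vs \<Longrightarrow> {e\<in>set es. v \<in> ends e} = {}"
  using walk_edge_mem(2)[of V E ends vs es] by blast

lemma walk_last_mem_ends_last:
  "walk V E ends (vs, es) \<Longrightarrow> es \<noteq> [] \<Longrightarrow> last vs \<in> ends (last es)"
  by (simp add: walk_last_conv_nth walk_nth_ends last_conv_nth)

lemma walk_take: "walk V E ends (vs, es) \<Longrightarrow> i \<le> length es \<Longrightarrow> walk V E ends (take (Suc i) vs, take i es)"
  unfolding walk_Pair_iff by (auto dest: in_set_takeD)

lemma walk_drop: "walk V E ends (vs, es) \<Longrightarrow> i \<le> length es \<Longrightarrow> walk V E ends (drop i vs, drop i es)"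
  unfolding walk_Pair_iff by (auto dest: in_set_dropD)

lemma walk_append:
  assumes w1: "walk V E ends (vs1, es1)" and w2: "walk V E ends (vs2, es2)" and "last vs1 = hd vs2"
  shows "walk V E ends (vs1 @ tl vs2, es1 @ es2)"
proof -
  obtain a vs2' where vs2: "vs2 = a # vs2'" using walk_length[OF w2] by (cases vs2) auto
  have l1: "length vs1 = Suc (length es1)" by (rule walk_length[OF w1])
  have a: "vs1 ! length es1 = a" using assms(3) walk_last_conv_nth[OF w1] vs2 by simp
  have "(es1 @ es2) ! j \<in> E \<and> ends ((es1 @ es2) ! j) = {(vs1 @ tl vs2) ! j, (vs1 @ tl vs2) ! Suc j}"
    if j: "j < length (es1 @ es2)" for j
  proof (cases "j < length es1")
    case True
    then show ?thesis using w1 l1 by (auto simp: walk_Pair_iff nth_append)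
  next
    case False
    then obtain k where k: "j = length es1 + k" "k < length es2" using j by (auto dest: le_Suc_ex simp: not_less)
    have "(vs1 @ tl vs2) ! j = vs2 ! k" "(vs1 @ tl vs2) ! Suc j = vs2 ! Suc k"
      using k l1 a vs2 by (cases k; auto simp: nth_append)+
    then show ?thesis using w2 k by (auto simp: walk_Pair_iff nth_append)
  qed
  then show ?thesis using w1 w2 vs2 by (auto simp: walk_Pair_iff)
qed

lemma walk_snoc:
  assumes "walk V E ends (vs, es)" "f \<in> E" "ends f = {last vs, y}" "y \<in> V"
  shows "walk V E ends (vs @ [y], es @ [f])"
proof -
  have "last vs \<in> V"
    using walk_vertices[OF assms(1)] walk_length[OF assms(1)] by (metis last_in_set list.size(3) nat.distinct(1) subsetD)
  then have "walk V E ends ([last vs, y], [f])" using assms by (simp add: walk_Pair_iff)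
  then show ?thesis using walk_append[OF assms(1)] by fastforce
qed

lemma walk_rev: assumes w: "walk V E ends (vs, es)" shows "walk V E ends (rev vs, rev es)"
proof -
  have "rev es ! j \<in> E \<and> ends (rev es ! j) = {rev vs ! j, rev vs ! Suc j}" if j: "j < length es" for j
  proof -
    let ?k = "length es - Suc j"
    have "rev es ! j = es ! ?k" "rev vs ! j = vs ! Suc ?k" "rev vs ! Suc j = vs ! ?k"
      using j walk_length[OF w] by (auto simp: rev_nth Suc_diff_Suc)
    then show ?thesis using w j by (auto simp: walk_Pair_iff)
  qed
  then show ?thesis using w by (auto simp: walk_Pair_iff)
qed

lemma walk_concat_walk:
  "walk V E ends W1 \<Longrightarrow> walk V E ends W2 \<Longrightarrow> last (fst W1) = hd (fst W2) \<Longrightarrow> walk V E ends (walk_concat W1 W2)"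
  by (cases W1; cases W2) (simp add: walk_concat_def walk_append)

lemma walk_concat_hd_last:
  assumes "walk V E ends W1" "walk V E ends W2" "last (fst W1) = hd (fst W2)"
  shows "hd (fst (walk_concat W1 W2)) = hd (fst W1)" "last (fst (walk_concat W1 W2)) = last (fst W2)"
proof -
  obtain c cs where "fst W2 = c # cs" using walk_nonempty[OF assms(2)] by (cases "fst W2") auto
  then show "hd (fst (walk_concat W1 W2)) = hd (fst W1)" "last (fst (walk_concat W1 W2)) = last (fst W2)"
    using walk_nonempty[OF assms(1)] assms(3) by (cases cs; simp add: walk_concat_def)+
qed

lemma walk_rev_walk: "walk V E ends W \<Longrightarrow> walk V E ends (walk_rev W)"
  by (cases W) (simp add: walk_rev_def walk_rev)

lemma path_nth_mem_ends:
  assumes w: "walk V E ends (vs, es)" and d: "distinct vs" and j: "j < length es"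
    and a: "a < length vs" "vs ! a \<in> ends (es ! j)"
  shows "a = j \<or> a = Suc j"
  using walk_nth_ends[OF w j] a d j walk_length[OF w] by (auto simp: nth_eq_iff_index_eq)

lemma distinct_edges_if_distinct_vertices:
  assumes w: "walk V E ends (vs, es)" and d: "distinct vs"
  shows "distinct es"
  unfolding distinct_conv_nth
proof (intro allI impI)
  fix j k assume jk: "j < length es" "k < length es" "j \<noteq> k"
  show "es ! j \<noteq> es ! k"
  proof
    assume "es ! j = es ! k"
    then have "j = k \<or> j = Suc k" "Suc j = k \<or> Suc j = Suc k"
      using path_nth_mem_ends[OF w d jk(2), of j] path_nth_mem_ends[OF w d jk(2), of "Suc j"]
        walk_nth_ends[OF w jk(1)] walk_length[OF w] jk by auto
    then show False using jk(3) by auto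
  qed
qed

lemma path_edges_at_ends:
  assumes w: "walk V E ends (pv, pe)" and d: "distinct pv" and ne: "pe \<noteq> []"
  shows "{e\<in>set pe. pv ! 0 \<in> ends e} = {hd pe}" "{e\<in>set pe. pv ! length pe \<in> ends e} = {last pe}"
proof -
  have l: "length pv = Suc (length pe)" by (rule walk_length[OF w])
  have endpoint: "e = pe ! (if a = 0 then 0 else length pe - 1)"
    if e: "e \<in> set pe" "pv ! a \<in> ends e" "a = 0 \<or> a = length pe" for e a
  proof -
    obtain j where j: "j < length pe" "pe ! j = e" using e(1) by (auto simp: in_set_conv_nth)
    then have "a = j \<or> a = Suc j" using path_nth_mem_ends[OF w d j(1), of a] e l by auto
    then have "j = (if a = 0 then 0 else length pe - 1)" using j(1) e(3) by auto
    then show ?thesis using j(2) by simp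
  qed
  moreover have "pv ! 0 \<in> ends (hd pe)" "pv ! length pe \<in> ends (last pe)"
    using walk_nth_ends[OF w, of 0] walk_nth_ends[OF w, of "length pe - 1"] ne
    by (simp_all add: hd_conv_nth last_conv_nth)
  then show "{e\<in>set pe. pv ! 0 \<in> ends e} = {hd pe}" "{e\<in>set pe. pv ! length pe \<in> ends e} = {last pe}"
    using endpoint[of _ 0] endpoint[of _ "length pe"] ne by (auto simp: hd_conv_nth last_conv_nth)
qed

lemma chi_Pair: "chi (vs, es) e = real (count_list es e)"
  by (simp add: chi_def)

lemma int_alternating_Pair_iff:
  "int_alternating col (vs, es) \<longleftrightarrow> (\<forall>j. Suc j < length es \<longrightarrow> col (es ! j) \<noteq> col (es ! Suc j))"
  by (simp add: int_alternating_def)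

lemma int_alternating_nth:
  "int_alternating col (vs, es) \<Longrightarrow> Suc j < length es \<Longrightarrow> col (es ! j) \<noteq> col (es ! Suc j)"
  by (simp add: int_alternating_Pair_iff)

lemma int_alternating_junction:
  assumes "int_alternating col (vs, xs @ ys)" "xs \<noteq> []" "ys \<noteq> []"
  shows "col (last xs) \<noteq> col (hd ys)"
  using int_alternating_nth[OF assms(1), of "length xs - 1"] assms(2,3)
  by (simp add: nth_append last_conv_nth hd_conv_nth)

lemma int_alternating_parity:
  assumes "int_alternating col (vs, es)" "j < length es"
  shows "col (es ! j) = col (es ! 0) \<longleftrightarrow> even j"
  using assms(2)
proof (induction j)
  case (Suc j)
  then show ?case using int_alternating_nth[OF assms(1), of j] color_neq_neqD by fastforce
qed simp

lemma int_alternating_last_hd: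
  "int_alternating col (vs, es) \<Longrightarrow> es \<noteq> [] \<Longrightarrow> col (last es) = col (hd es) \<longleftrightarrow> odd (length es)"
  using int_alternating_parity[of col vs es "length es - 1"]
  by (cases "length es") (auto simp: last_conv_nth hd_conv_nth)

lemma alternating_closed_even_length:
  "alternating col W \<Longrightarrow> closed_walk W \<Longrightarrow> snd W \<noteq> [] \<Longrightarrow> even (length (snd W))"
  using int_alternating_last_hd[of col "fst W" "snd W"] by (simp add: alternating_def)

lemma int_alternating_take: "int_alternating col (vs, es) \<Longrightarrow> int_alternating col (vs', take i es)"
  and int_alternating_drop: "int_alternating col (vs, es) \<Longrightarrow> int_alternating col (vs', drop i es)"
  by (simp_all add: int_alternating_Pair_iff)

lemma int_alternating_rev:
  assumes "int_alternating col (vs, es)" shows "int_alternating col (vs', rev es)"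
  unfolding int_alternating_Pair_iff
proof (intro allI impI)
  fix j assume j: "Suc j < length (rev es)"
  let ?k = "length es - Suc (Suc j)"
  have "rev es ! j = es ! Suc ?k" "rev es ! Suc j = es ! ?k" "Suc ?k < length es"
    using j by (simp_all add: rev_nth Suc_diff_Suc)
  then show "col (rev es ! j) \<noteq> col (rev es ! Suc j)"
    using int_alternating_nth[OF assms, of ?k] j by auto
qed

lemma int_alternating_append:
  assumes "int_alternating col (vs1, es1)" "int_alternating col (vs2, es2)"
    "es1 \<noteq> [] \<Longrightarrow> es2 \<noteq> [] \<Longrightarrow> col (last es1) \<noteq> col (hd es2)"
  shows "int_alternating col (vs, es1 @ es2)"
  unfolding int_alternating_Pair_iff
proof (intro allI impI)
  fix j assume j: "Suc j < length (es1 @ es2)"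
  consider "Suc j < length es1" | "Suc j = length es1" | "length es1 \<le> j" by linarith
  then show "col ((es1 @ es2) ! j) \<noteq> col ((es1 @ es2) ! Suc j)"
  proof cases
    case 2
    then have "es1 \<noteq> []" "es2 \<noteq> []" "(es1 @ es2) ! Suc j = hd es2" using j by (auto simp: nth_append hd_conv_nth)
    moreover have "(es1 @ es2) ! j = last es1"
      using 2 by (metis Zero_not_Suc diff_Suc_1 last_conv_nth length_0_conv lessI nth_append)
    ultimately show ?thesis using assms(3) by simp
  qed (use assms(1,2) j in \<open>auto simp: int_alternating_Pair_iff nth_append Suc_diff_le\<close>)
qed

lemma CAW_Pair_iff: "CAW V E ends col (vs, es) \<longleftrightarrow> walk V E ends (vs, es) \<and> hd vs = last vs \<and> es \<noteq> [] \<and>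
    int_alternating col (vs, es) \<and> col (last es) \<noteq> col (hd es)"
  by (auto simp: CAW_def closed_walk_def alternating_def)

section \<open>Cycles and bicycles\<close>

lemma walk_cycle_nth_inj:
  assumes "walk V E ends (cv, ce)" "cycle (cv, ce)" "i < length ce" "j < length ce" "cv ! i = cv ! j"
  shows "i = j"
  using assms walk_length[OF assms(1)] by (auto simp: cycle_def nth_butlast[symmetric] nth_eq_iff_index_eq)

lemma walk_cycle_nth_last: "walk V E ends (cv, ce) \<Longrightarrow> cycle (cv, ce) \<Longrightarrow> cv ! length ce = cv ! 0"
  using walk_last_conv_nth[of V E ends cv ce] walk_length[of V E ends cv ce]
  by (cases cv) (auto simp: cycle_def closed_walk_def)

lemma int_alternating_cycle_cases:
  assumes "walk V E ends C" "cycle C" "int_alternating col C"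
  shows "even (length (snd C)) \<Longrightarrow> alt_cycle V E ends col C"
    and "odd (length (snd C)) \<Longrightarrow> odd_ia_cycle V E ends col C (hd (fst C))"
  using assms int_alternating_last_hd[of col "fst C" "snd C"]
  by (auto simp: alt_cycle_def odd_ia_cycle_def alternating_def cycle_def)

lemma odd_ia_cycleD:
  assumes C: "odd_ia_cycle V E ends col (cv, ce) u"
  shows "walk V E ends (cv, ce)" "int_alternating col (cv, ce)" "distinct ce" "ce \<noteq> []"
    "cv ! 0 = u" "cv ! length ce = u" "last cv = u" "col (last ce) = col (hd ce)"
proof -
  show w: "walk V E ends (cv, ce)" and ia: "int_alternating col (cv, ce)" and "distinct ce"
    and ne: "ce \<noteq> []" using C by (auto simp: odd_ia_cycle_def cycle_def)
  have cy: "cycle (cv, ce)" using C by (simp add: odd_ia_cycle_def)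
  show "cv ! 0 = u" using C walk_length[OF w] by (cases cv) (auto simp: odd_ia_cycle_def)
  then show "cv ! length ce = u" using walk_cycle_nth_last[OF w cy] by simp
  then show "last cv = u" using walk_last_conv_nth[OF w] by simp
  show "col (last ce) = col (hd ce)"
    using int_alternating_last_hd[OF ia ne] C by (simp add: odd_ia_cycle_def)
qed

lemma odd_ia_cycle_nth_neq_base:
  assumes C: "odd_ia_cycle V E ends col (cv, ce) u" and j: "0 < j" "j < length ce"
  shows "cv ! j \<noteq> u"
proof
  assume "cv ! j = u"
  moreover have "cycle (cv, ce)" using C by (simp add: odd_ia_cycle_def)
  moreover have "0 < length ce" using j by linarith
  ultimately have "j = 0"
    using walk_cycle_nth_inj[OF odd_ia_cycleD(1)[OF C] _ j(2)] odd_ia_cycleD(5)[OF C] by simp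
  then show False using j by simp
qed

lemma odd_ia_cycle_rev:
  assumes C: "odd_ia_cycle V E ends col (cv, ce) u"
  shows "odd_ia_cycle V E ends col (rev cv, rev ce) u"
proof -
  have "2 \<le> length cv"
    using walk_length[OF odd_ia_cycleD(1)[OF C]] odd_ia_cycleD(4)[OF C] by (cases ce) auto
  then have "distinct (tl cv)"
    using C by (intro distinct_tl_if_closed) (auto simp: odd_ia_cycle_def cycle_def closed_walk_def)
  then have "cycle (rev cv, rev ce)" using C
    by (auto simp: odd_ia_cycle_def cycle_def closed_walk_def hd_rev last_rev butlast_rev)
  moreover have "walk V E ends (rev cv, rev ce)" "int_alternating col (rev cv, rev ce)"
    using walk_rev[OF odd_ia_cycleD(1)[OF C]] int_alternating_rev[OF odd_ia_cycleD(2)[OF C]] .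
  ultimately show ?thesis using C odd_ia_cycleD(7)[OF C] by (simp add: odd_ia_cycle_def hd_rev)
qed

lemma bicycle_walk:
  assumes W1: "walk V E ends W1" and P: "walk V E ends P" and W2: "walk V E ends W2"
    and "last (fst W1) = hd (fst P)" "last (fst P) = hd (fst W2)" "last (fst W2) = hd (fst W2)"
  defines "W \<equiv> walk_concat (walk_concat (walk_concat W1 P) W2) (walk_rev P)"
  shows "walk V E ends W" "hd (fst W1) = last (fst W1) \<Longrightarrow> closed_walk W"
proof -
  have rev: "walk V E ends (walk_rev P)" "hd (fst (walk_rev P)) = last (fst P)" "last (fst (walk_rev P)) = hd (fst P)"
    using walk_rev_walk[OF P] walk_nonempty[OF P] by (auto simp: walk_rev_def hd_rev last_rev)
  note c1 = walk_concat_walk[OF W1 P] walk_concat_hd_last[OF W1 P]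
  note c2 = walk_concat_walk[OF c1(1) W2] walk_concat_hd_last[OF c1(1) W2]
  note c3 = walk_concat_walk[OF c2(1) rev(1)] walk_concat_hd_last[OF c2(1) rev(1)]
  show "walk V E ends W" using assms c1 c2 c3 rev unfolding W_def by simp
  show "hd (fst W1) = last (fst W1) \<Longrightarrow> closed_walk W" using assms c1 c2 c3 rev
    unfolding W_def closed_walk_def by simp
qed

lemma bicycle_alternating:
  assumes "int_alternating col (cv1, ce1)" "int_alternating col (pv, pe)" "int_alternating col (cv2, ce2)"
    "ce1 \<noteq> []" "ce2 \<noteq> []" "col (last ce1) = col (hd ce1)" "col (last ce2) = col (hd ce2)"
    "pe \<noteq> [] \<Longrightarrow> col (hd pe) \<noteq> col (hd ce1) \<and> col (last pe) \<noteq> col (hd ce2)"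
    "pe = [] \<Longrightarrow> col (hd ce1) \<noteq> col (hd ce2)"
  shows "alternating col (vs, ce1 @ pe @ ce2 @ rev pe)"
proof -
  have "int_alternating col (vs, ce2 @ rev pe)"
    by (rule int_alternating_append[OF assms(3) int_alternating_rev[OF assms(2)]])
      (use assms(7,8) in \<open>auto simp: last_rev hd_rev\<close>)
  then have "int_alternating col (vs, pe @ ce2 @ rev pe)"
    by (rule int_alternating_append[OF assms(2)]) (use assms(5,8) in auto)
  then have "int_alternating col (vs, ce1 @ pe @ ce2 @ rev pe)"
    by (rule int_alternating_append[OF assms(1)]) (use assms(5,6,8,9) in \<open>cases "pe = []"; auto\<close>)
  moreover have "col (last (ce1 @ pe @ ce2 @ rev pe)) \<noteq> col (hd (ce1 @ pe @ ce2 @ rev pe))"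
    using assms(4,5,7,8,9) by (cases "pe = []") (auto simp: last_rev)
  ultimately show ?thesis by (simp add: alternating_def)
qed

lemma alt_bicycleI:
  assumes C1: "odd_ia_cycle V E ends col (cv1, ce1) u" and C2: "odd_ia_cycle V E ends col (cv2, ce2) w"
    and P: "walk V E ends (pv, pe)" "path (pv, pe)" "hd pv = u" "last pv = w" "int_alternating col (pv, pe)"
    and disj: "set cv1 \<inter> set pv = {u}" "set pv \<inter> set cv2 = {w}" "set cv1 \<inter> set cv2 \<subseteq> {u} \<inter> {w}"
    and junctions: "pe \<noteq> [] \<Longrightarrow> col (hd pe) \<noteq> col (hd ce1) \<and> col (last pe) \<noteq> col (hd ce2)"
      "pe = [] \<Longrightarrow> col (hd ce1) \<noteq> col (hd ce2)"
  shows "alt_bicycle V E ends col (walk_concat (walk_concat (walk_concat (cv1, ce1) (pv, pe)) (cv2, ce2)) (walk_rev (pv, pe)))"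
    (is "alt_bicycle V E ends col ?W")
proof -
  note D1 = odd_ia_cycleD[OF C1] and D2 = odd_ia_cycleD[OF C2]
  have "walk V E ends ?W"
    by (rule bicycle_walk(1)[OF D1(1) P(1) D2(1)])
      (use D1(7) D2(5,7) P(3,4) walk_nonempty[OF D2(1)] in \<open>auto simp: hd_conv_nth\<close>)
  moreover have "alternating col (fst ?W, ce1 @ pe @ ce2 @ rev pe)"
    by (rule bicycle_alternating[OF D1(2) P(5) D2(2) D1(4) D2(4) D1(8) D2(8) junctions])
  then have "alternating col ?W" by (simp add: walk_concat_def walk_rev_def)
  ultimately show ?thesis unfolding alt_bicycle_def using C1 C2 P disj
    by (intro exI[of _ "(cv1, ce1)"] exI[of _ "(pv, pe)"] exI[of _ "(cv2, ce2)"] exI[of _ u] exI[of _ w]) simp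
qed

lemma alt_bicycleE:
  assumes "alt_bicycle V E ends col W"
  obtains cv1 ce1 pv pe cv2 ce2 u w where
    "odd_ia_cycle V E ends col (cv1, ce1) u" "odd_ia_cycle V E ends col (cv2, ce2) w"
    "walk V E ends (pv, pe)" "distinct pv" "pv ! 0 = u" "pv ! length pe = w"
    "set cv1 \<inter> set pv = {u}" "set pv \<inter> set cv2 = {w}" "set cv1 \<inter> set cv2 \<subseteq> {u} \<inter> {w}"
    "snd W = ce1 @ pe @ ce2 @ rev pe" "walk V E ends W" "closed_walk W" "alternating col W"
proof -
  obtain W1 P W2 u w where C: "odd_ia_cycle V E ends col W1 u" "odd_ia_cycle V E ends col W2 w"
    and P: "walk V E ends P" "path P" "hd (fst P) = u" "last (fst P) = w"
    and disj: "set (fst W1) \<inter> set (fst P) = {u}" "set (fst P) \<inter> set (fst W2) = {w}"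
      "set (fst W1) \<inter> set (fst W2) \<subseteq> {u} \<inter> {w}"
    and W: "W = walk_concat (walk_concat (walk_concat W1 P) W2) (walk_rev P)"
      "walk V E ends W" "alternating col W"
    using assms unfolding alt_bicycle_def by blast
  obtain cv1 ce1 pv pe cv2 ce2 where parts: "W1 = (cv1, ce1)" "P = (pv, pe)" "W2 = (cv2, ce2)"
    by (cases W1, cases P, cases W2) auto
  note C1 = odd_ia_cycleD[OF C(1)[unfolded parts]] and C2 = odd_ia_cycleD[OF C(2)[unfolded parts]]
  have "closed_walk W" unfolding W(1) parts
    using C1(1,7) C2(1,7) P C(1,2) parts
    by (intro bicycle_walk(2)) (auto simp: odd_ia_cycle_def)
  moreover have "pv ! 0 = u" "pv ! length pe = w"
    using P parts walk_last_conv_nth[of V E ends pv pe] walk_nonempty[OF P(1)] by (auto simp: hd_conv_nth)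
  ultimately show thesis
    using that[of cv1 ce1 u cv2 ce2 w pv pe] C P disj W parts
    by (auto simp: path_def walk_concat_def walk_rev_def)
qed

section \<open>Irreducible closed alternating walks\<close>

lemma CAW_loop_at_repeated_step:
  assumes W: "CAW V E ends col (vs, es)" and ik: "i < k" "k < length es" and eq: "es ! i = es ! k" "vs ! i = vs ! k"
  shows "CAW V E ends col (take (Suc (k - i)) (drop i vs), take (k - i) (drop i es))"
  unfolding CAW_Pair_iff
proof (intro conjI)
  have w: "walk V E ends (vs, es)" and ia: "int_alternating col (vs, es)" using W by (auto simp: CAW_Pair_iff)
  show "walk V E ends (take (Suc (k - i)) (drop i vs), take (k - i) (drop i es))"
    using ik by (intro walk_take walk_drop w) auto
  show "hd (take (Suc (k - i)) (drop i vs)) = last (take (Suc (k - i)) (drop i vs))"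
    using ik walk_length[OF w] eq by (simp add: hd_drop_conv_nth last_conv_nth)
  show "take (k - i) (drop i es) \<noteq> []" using ik by simp
  show "int_alternating col (take (Suc (k - i)) (drop i vs), take (k - i) (drop i es))"
    by (rule int_alternating_take, rule int_alternating_drop, rule ia)
  have "last (take (k - i) (drop i es)) = es ! (k - 1)" "hd (take (k - i) (drop i es)) = es ! i"
    using ik by (simp_all add: last_conv_nth hd_drop_conv_nth)
  then show "col (last (take (k - i) (drop i es))) \<noteq> col (hd (take (k - i) (drop i es)))"
    using int_alternating_nth[OF ia, of "k - 1"] ik eq by simp
qed

lemma CAW_shortcut_at_repeated_step:
  assumes W: "CAW V E ends col (vs, es)" and ik: "i < k" "k < length es" and eq: "es ! i = es ! k" "vs ! i = vs ! k"
  shows "CAW V E ends col (take (Suc i) vs @ tl (drop k vs), take i es @ drop k es)"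
  unfolding CAW_Pair_iff
proof (intro conjI)
  have w: "walk V E ends (vs, es)" and cl: "hd vs = last vs" and ia: "int_alternating col (vs, es)"
    and wrap: "col (last es) \<noteq> col (hd es)" using W by (auto simp: CAW_Pair_iff)
  have l: "length vs = Suc (length es)" by (rule walk_length[OF w])
  show "walk V E ends (take (Suc i) vs @ tl (drop k vs), take i es @ drop k es)"
    using ik l eq by (intro walk_append walk_take walk_drop w) (auto simp: take_Suc_conv_app_nth hd_drop_conv_nth)
  have "tl (drop k vs) \<noteq> []" using ik l by (simp flip: length_greater_0_conv)
  then show "hd (take (Suc i) vs @ tl (drop k vs)) = last (take (Suc i) vs @ tl (drop k vs))"
    using cl l ik by (cases vs) (auto simp: last_tl)
  show "take i es @ drop k es \<noteq> []" using ik by simp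
  show "int_alternating col (take (Suc i) vs @ tl (drop k vs), take i es @ drop k es)"
  proof (rule int_alternating_append[OF int_alternating_take[OF ia] int_alternating_drop[OF ia]])
    assume "take i es \<noteq> []"
    then have "last (take i es) = es ! (i - 1)" "hd (drop k es) = es ! i" "Suc (i - 1) = i"
      using ik eq by (auto simp: last_conv_nth hd_drop_conv_nth)
    then show "col (last (take i es)) \<noteq> col (hd (drop k es))"
      using int_alternating_nth[OF ia, of "i - 1"] ik by simp
  qed
  have "hd (take i es @ drop k es) = hd es" using ik eq by (cases i; cases es) (auto simp: hd_drop_conv_nth)
  moreover have "last (take i es @ drop k es) = last es" using ik by simp
  ultimately show "col (last (take i es @ drop k es)) \<noteq> col (hd (take i es @ drop k es))"
    using wrap by simp
qed

lemma CAW_split_at_repeated_step: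
  assumes W: "CAW V E ends col (vs, es)" and ik: "i < k" "k < length es"
    and eq: "es ! i = es ! k" "vs ! i = vs ! k"
  shows "\<exists>W1 W2. CAW V E ends col W1 \<and> CAW V E ends col W2 \<and> chi (vs, es) = (\<lambda>e. chi W1 e + chi W2 e)"
proof -
  have "es = take i es @ take (k - i) (drop i es) @ drop k es"
    using ik by (metis add_diff_inverse_nat append.assoc append_take_drop_id not_less_iff_gr_or_eq take_add)
  then have "count_list es e = count_list (take (k - i) (drop i es)) e + count_list (take i es @ drop k es) e" for e
    by (metis add.left_commute count_list_append)
  then have "chi (vs, es) = (\<lambda>e. chi (take (Suc (k - i)) (drop i vs), take (k - i) (drop i es)) e
      + chi (take (Suc i) vs @ tl (drop k vs), take i es @ drop k es) e)"
    by (simp add: chi_def)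
  then show ?thesis using CAW_loop_at_repeated_step[OF assms] CAW_shortcut_at_repeated_step[OF assms] by blast
qed

text \<open>Of three traversals of an edge, two leave from the same endpoint, and there the walk splits.\<close>
lemma irreducible_CAW_chi_012:
  assumes "irreducible_CAW V E ends col W" shows "chi W e \<in> {0, 1, 2}"
proof -
  obtain vs es where W: "W = (vs, es)" by (cases W)
  have cW: "CAW V E ends col (vs, es)" using assms W by (simp add: irreducible_CAW_def)
  have w: "walk V E ends (vs, es)" using cW by (simp add: CAW_def)
  have "count_list es e < 3"
  proof (rule ccontr)
    assume "\<not> count_list es e < 3"
    then obtain i j k where ijk: "i < j" "j < k" "k < length es" "es ! i = e" "es ! j = e" "es ! k = e"
      using count_list_ge_3_nth by (metis not_less)
    then have "ends e = {vs ! i, vs ! Suc i}" "ends e = {vs ! j, vs ! Suc j}" "ends e = {vs ! k, vs ! Suc k}"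
      using walk_nth_ends[OF w, of i] walk_nth_ends[OF w, of j] walk_nth_ends[OF w, of k] by simp_all
    then have "vs ! i = vs ! j \<or> vs ! i = vs ! k \<or> vs ! j = vs ! k" by (metis doubleton_eq_iff insertCI)
    then obtain a b where "a < b" "b < length es" "es ! a = es ! b" "vs ! a = vs ! b"
      using ijk by (metis order.strict_trans)
    from CAW_split_at_repeated_step[OF cW this] show False using assms W by (auto simp: irreducible_CAW_def)
  qed
  then show ?thesis using W by (auto simp: chi_Pair)
qed

lemma length_eq_if_chi_add:
  assumes "chi W = (\<lambda>e. chi W1 e + chi W2 e)"
  shows "length (snd W) = length (snd W1) + length (snd W2)"
proof -
  let ?X = "set (snd W) \<union> set (snd W1) \<union> set (snd W2)"
  have "count_list (snd W) e = count_list (snd W1) e + count_list (snd W2) e" for e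
    using fun_cong[OF assms, of e] by (simp add: chi_def flip: of_nat_add)
  then have "sum (count_list (snd W)) ?X = sum (count_list (snd W1)) ?X + sum (count_list (snd W2)) ?X"
    by (simp add: sum.distrib)
  moreover have "sum (count_list xs) ?X = length xs" if "xs \<in> {snd W, snd W1, snd W2}" for xs
    using that by (intro sum_count_set) auto
  ultimately show ?thesis by simp
qed

text \<open>Splitting reducible walks terminates because both parts are shorter.\<close>
lemma chi_sum_irreducible_decomposition:
  assumes nonempty: "\<And>W. P W \<Longrightarrow> snd W \<noteq> []" and "\<forall>W\<in>set Ws. P W"
  shows "\<exists>Ws'. (\<forall>W\<in>set Ws'. P W \<and> \<not> (\<exists>W1 W2. P W1 \<and> P W2 \<and> chi W = (\<lambda>e. chi W1 e + chi W2 e)))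
           \<and> (\<lambda>e. \<Sum>W\<leftarrow>Ws. chi W e) = (\<lambda>e. \<Sum>W\<leftarrow>Ws'. chi W e)"
  using assms(2)
proof (induction "\<Sum>W\<leftarrow>Ws. length (snd W)" arbitrary: Ws rule: less_induct)
  case less
  show ?case
  proof (cases Ws)
    case Nil
    then show ?thesis by (intro exI[of _ "[]"]) simp
  next
    case (Cons W rest)
    have PW: "P W" and "\<forall>W\<in>set rest. P W" using less.prems Cons by auto
    moreover have "(\<Sum>W\<leftarrow>rest. length (snd W)) < (\<Sum>W\<leftarrow>Ws. length (snd W))"
      using nonempty[OF PW] Cons by simp
    ultimately obtain Rs where Rs: "\<forall>W\<in>set Rs. P W \<and> \<not> (\<exists>W1 W2. P W1 \<and> P W2 \<and> chi W = (\<lambda>e. chi W1 e + chi W2 e))"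
        "(\<lambda>e. \<Sum>W\<leftarrow>rest. chi W e) = (\<lambda>e. \<Sum>W\<leftarrow>Rs. chi W e)"
      using less.hyps by blast
    show ?thesis
    proof (cases "\<exists>W1 W2. P W1 \<and> P W2 \<and> chi W = (\<lambda>e. chi W1 e + chi W2 e)")
      case False
      then show ?thesis using PW Rs Cons by (intro exI[of _ "W # Rs"]) (auto simp: fun_eq_iff)
    next
      case True
      then obtain W1 W2 where W12: "P W1" "P W2" "chi W = (\<lambda>e. chi W1 e + chi W2 e)" by blast
      have "length (snd W1) < (\<Sum>W\<leftarrow>Ws. length (snd W))" "length (snd W2) < (\<Sum>W\<leftarrow>Ws. length (snd W))"
        using length_eq_if_chi_add[OF W12(3)] nonempty[OF W12(1)] nonempty[OF W12(2)] Cons by auto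
      then obtain R1 R2 where
        "\<forall>W\<in>set R1. P W \<and> \<not> (\<exists>W1 W2. P W1 \<and> P W2 \<and> chi W = (\<lambda>e. chi W1 e + chi W2 e))"
        "\<forall>W\<in>set R2. P W \<and> \<not> (\<exists>W1 W2. P W1 \<and> P W2 \<and> chi W = (\<lambda>e. chi W1 e + chi W2 e))"
        "chi W1 = (\<lambda>e. \<Sum>W\<leftarrow>R1. chi W e)" "chi W2 = (\<lambda>e. \<Sum>W\<leftarrow>R2. chi W e)"
        using less.hyps[of "[W1]"] less.hyps[of "[W2]"] W12 by fastforce
      then show ?thesis using Rs W12(3) Cons by (intro exI[of _ "R1 @ R2 @ Rs"]) (auto simp: fun_eq_iff)
    qed
  qed
qed

section \<open>The alternating cone\<close>

definition col_sign :: "color \<Rightarrow> real" where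
  "col_sign c = (if c = R then 1 else -1)"

lemma col_sign_neq: "c \<noteq> d \<Longrightarrow> col_sign d = - col_sign c"
  by (cases c; cases d) (simp_all add: col_sign_def)

lemma ray_scale: assumes t: "0 < t" shows "ray (\<lambda>e. t * x e) = ray x"
proof (intro equalityI subsetI)
  fix y assume "y \<in> ray (\<lambda>e. t * x e)"
  then obtain s where "y = (\<lambda>e. s * (t * x e))" "0 \<le> s" by (auto simp: ray_def)
  then show "y \<in> ray x" using t unfolding ray_def by (intro CollectI exI[of _ "s * t"]) auto
next
  fix y assume "y \<in> ray x"
  then obtain s where "y = (\<lambda>e. s * x e)" "0 \<le> s" by (auto simp: ray_def)
  then show "y \<in> ray (\<lambda>e. t * x e)" using t unfolding ray_def by (intro CollectI exI[of _ "s / t"]) auto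
qed

locale bicolored_graph =
  fixes V :: "'v set" and E :: "'e set" and ends :: "'e \<Rightarrow> 'v set" and col :: "'e \<Rightarrow> color"
  assumes two_colored: "two_colored_graph V E ends col"
begin

lemma finite_V: "finite V" and finite_E: "finite E"
  and ends_subset_V: "e \<in> E \<Longrightarrow> ends e \<subseteq> V" and card_ends: "e \<in> E \<Longrightarrow> card (ends e) = 2"
  using two_colored by (auto simp: two_colored_graph_def)

lemma ends_obtain_other:
  assumes "e \<in> E" "v \<in> ends e" obtains y where "y \<noteq> v" "ends e = {v, y}"
  using card_ends[OF assms(1)] assms(2) by (metis card_2_iff insert_commute insert_iff singletonD)

lemma walk_nth_neq: "walk V E ends (vs, es) \<Longrightarrow> j < length es \<Longrightarrow> vs ! j \<noteq> vs ! Suc j"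
  using card_ends by (fastforce simp: walk_Pair_iff)

lemma walks_disjoint_edges:
  assumes "walk V E ends (vs1, es1)" "walk V E ends (vs2, es2)" "set vs1 \<inter> set vs2 \<subseteq> {u}"
  shows "set es1 \<inter> set es2 = {}"
proof (rule ccontr)
  assume "set es1 \<inter> set es2 \<noteq> {}"
  then obtain e where e: "e \<in> set es1" "e \<in> set es2" by blast
  then have "ends e \<subseteq> {u}" "card (ends e) = 2"
    using walk_edge_mem[OF assms(1) e(1)] walk_edge_mem[OF assms(2) e(2)] assms(3) card_ends by auto
  then show False using card_mono[of "{u}" "ends e"] by simp
qed

lemma odd_ia_cycle_edges_at_base:
  assumes C: "odd_ia_cycle V E ends col (cv, ce) u"
  shows "{e\<in>set ce. u \<in> ends e} = {hd ce, last ce}" "hd ce \<noteq> last ce"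
proof -
  note D = odd_ia_cycleD[OF C]
  have hd: "hd ce = ce ! 0" and last: "last ce = ce ! (length ce - 1)" using D(4) by (simp_all add: hd_conv_nth last_conv_nth)
  show "{e\<in>set ce. u \<in> ends e} = {hd ce, last ce}"
  proof (intro equalityI subsetI)
    fix e assume "e \<in> {e\<in>set ce. u \<in> ends e}"
    then obtain k where k: "k < length ce" "ce ! k = e" "u \<in> {cv ! k, cv ! Suc k}"
      using walk_nth_ends[OF D(1)] by (auto simp: in_set_conv_nth)
    then have "k = 0 \<or> Suc k = length ce"
      using odd_ia_cycle_nth_neq_base[OF C, of k] odd_ia_cycle_nth_neq_base[OF C, of "Suc k"] by force
    then show "e \<in> {hd ce, last ce}" using k(2) hd last by (metis diff_Suc_1 insertCI)
  next
    fix e assume "e \<in> {hd ce, last ce}"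
    moreover have "u \<in> ends (hd ce)" using walk_nth_ends[OF D(1), of 0] D(4,5) hd by simp
    moreover have "u \<in> ends (last ce)" using walk_nth_ends[OF D(1), of "length ce - 1"] D(4,6) last by simp
    ultimately show "e \<in> {e\<in>set ce. u \<in> ends e}" using D(4) by auto
  qed
  have "length ce \<noteq> 1" using walk_nth_neq[OF D(1), of 0] D(4,5,6) by auto
  then show "hd ce \<noteq> last ce" using D(3,4) hd last by (auto simp: nth_eq_iff_index_eq le_Suc_eq)
qed

definition balance :: "('e \<Rightarrow> real) \<Rightarrow> 'v \<Rightarrow> real" where
  "balance y v = (\<Sum>e\<in>{e\<in>E. v \<in> ends e}. col_sign (col e) * y e)"

lemma balance_eq_red_minus_blue:
  "balance y v = (\<Sum>e\<in>{e\<in>E. v \<in> ends e \<and> col e = R}. y e) - (\<Sum>e\<in>{e\<in>E. v \<in> ends e \<and> col e = B}. y e)"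
proof -
  have "{e\<in>E. v \<in> ends e} = {e\<in>E. v \<in> ends e \<and> col e = R} \<union> {e\<in>E. v \<in> ends e \<and> col e = B}"
    using color.exhaust by blast
  then have "balance y v = (\<Sum>e\<in>{e\<in>E. v \<in> ends e \<and> col e = R}. col_sign (col e) * y e)
      + (\<Sum>e\<in>{e\<in>E. v \<in> ends e \<and> col e = B}. col_sign (col e) * y e)"
    unfolding balance_def using finite_E by (subst sum.union_disjoint[symmetric]) auto
  then show ?thesis by (simp add: col_sign_def sum_negf)
qed

lemma alt_cone_iff: "y \<in> alt_cone V E ends col \<longleftrightarrow>
    (\<forall>e\<in>E. 0 \<le> y e) \<and> (\<forall>e. e \<notin> E \<longrightarrow> y e = 0) \<and> (\<forall>v\<in>V. balance y v = 0)"
  by (auto simp: alt_cone_def balance_eq_red_minus_blue)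

lemma alt_cone_nonneg: "y \<in> alt_cone V E ends col \<Longrightarrow> 0 \<le> y e"
  by (cases "e \<in> E") (auto simp: alt_cone_iff)

lemma balance_add: "balance (\<lambda>e. y e + z e) v = balance y v + balance z v"
  by (simp add: balance_def ring_distribs sum.distrib)

lemma balance_diff: "balance (\<lambda>e. y e - z e) v = balance y v - balance z v"
  by (simp add: balance_def right_diff_distrib sum_subtractf)

lemma balance_scale: "balance (\<lambda>e. t * y e) v = t * balance y v"
  by (simp add: balance_def sum_distrib_left mult.left_commute)

lemma alt_cone_scale: "y \<in> alt_cone V E ends col \<Longrightarrow> 0 \<le> t \<Longrightarrow> (\<lambda>e. t * y e) \<in> alt_cone V E ends col"
  by (simp add: alt_cone_iff balance_scale)

lemma alt_cone_diff:
  "y \<in> alt_cone V E ends col \<Longrightarrow> z \<in> alt_cone V E ends col \<Longrightarrow> (\<And>e. z e \<le> y e) \<Longrightarrow>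
   (\<lambda>e. y e - z e) \<in> alt_cone V E ends col"
  by (simp add: alt_cone_iff balance_diff)

lemma balance_indicator:
  "f \<in> E \<Longrightarrow> balance (\<lambda>e. if f = e then 1 else 0) v = (if v \<in> ends f then col_sign (col f) else 0)"
  unfolding balance_def using finite_E by (simp add: if_distrib[of "\<lambda>x. _ * x"] cong: if_cong)

text \<open>Along an internally alternating walk the contributions at inner vertices cancel,
  so only the two end vertices carry a nonzero balance.\<close>
lemma balance_chi:
  "walk V E ends (vs, es) \<Longrightarrow> es \<noteq> [] \<Longrightarrow> int_alternating col (vs, es) \<Longrightarrow>
   balance (chi (vs, es)) v = col_sign (col (hd es)) * (if hd vs = v then 1 else 0)
     + col_sign (col (last es)) * (if last vs = v then 1 else 0)"
proof (induction es arbitrary: vs)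
  case (Cons f es)
  obtain a b vs' where vs: "vs = a # b # vs'"
    using walk_length[OF Cons.prems(1)] by (metis Suc_length_conv length_Cons)
  have w: "walk V E ends (b # vs', es)" using walk_drop[OF Cons.prems(1), of 1] vs by simp
  have f: "f \<in> E" "ends f = {a, b}" "a \<noteq> b"
    using Cons.prems(1) walk_nth_neq[OF Cons.prems(1), of 0] vs by (auto simp: walk_Pair_iff)
  have chi: "chi (vs, f # es) = (\<lambda>e. chi (b # vs', es) e + (if f = e then 1 else 0))"
    using vs by (simp add: chi_def fun_eq_iff)
  have bf: "balance (\<lambda>e. if f = e then 1 else 0) v
      = col_sign (col f) * (if a = v then 1 else 0) + col_sign (col f) * (if b = v then 1 else 0)"
    using balance_indicator[OF f(1)] f by auto
  show ?case
  proof (cases "es = []")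
    case True
    then show ?thesis using chi bf vs walk_length[OF Cons.prems(1)]
      by (simp add: balance_add balance_def chi_def)
  next
    case False
    have "col f \<noteq> col (hd es)" using int_alternating_nth[OF Cons.prems(3), of 0] False by (simp add: hd_conv_nth)
    moreover have "int_alternating col (b # vs', es)"
      using int_alternating_drop[OF Cons.prems(3), of "b # vs'" 1] by simp
    ultimately show ?thesis using Cons.IH[OF w False] chi bf vs False
      by (simp add: balance_add col_sign_neq)
  qed
qed simp

lemma CAW_chi_in_alt_cone: assumes "CAW V E ends col W" shows "chi W \<in> alt_cone V E ends col"
proof -
  obtain vs es where W: "W = (vs, es)" by (cases W)
  have w: "walk V E ends (vs, es)" and cl: "hd vs = last vs" and ne: "es \<noteq> []"
    and ia: "int_alternating col (vs, es)" and wrap: "col (last es) \<noteq> col (hd es)"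
    using assms W by (auto simp: CAW_Pair_iff)
  have "balance (chi W) v = 0" for v
    using balance_chi[OF w ne ia, of v] col_sign_neq[OF wrap] cl W by simp
  moreover have "e \<notin> E \<Longrightarrow> chi W e = 0" for e
    using walk_edge_mem[OF w] W by (auto simp: chi_def count_list_0_iff)
  ultimately show ?thesis by (simp add: alt_cone_iff chi_def)
qed

lemma CAW_chi_hd_pos: assumes "CAW V E ends col W" shows "0 < chi W (hd (snd W))"
proof -
  have "hd (snd W) \<in> set (snd W)" using assms by (simp add: CAW_def)
  then show ?thesis using count_list_0_iff[of "snd W" "hd (snd W)"] by (simp add: chi_def)
qed

lemma sum_chi_eq_length: "walk V E ends W \<Longrightarrow> (\<Sum>e\<in>E. chi W e) = real (length (snd W))"
  using walk_edge_mem[of V E ends "fst W" "snd W"] finite_E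
  by (simp add: chi_def sum_count_set subset_iff flip: of_nat_sum)

section \<open>Integral vectors of the cone\<close>

text \<open>Otherwise the residual vector would have nonzero balance at the last vertex, all of
  it carried by edges of the colour of the last edge.\<close>
lemma alt_walk_extension:
  assumes x: "x \<in> alt_cone V E ends col" and x_int: "\<forall>e. x e \<in> \<int>"
    and w: "walk V E ends (vs, es)" and ne: "es \<noteq> []" and ia: "int_alternating col (vs, es)"
    and below: "\<forall>e. chi (vs, es) e \<le> x e"
    and not_CAW: "\<not> (hd vs = last vs \<and> col (last es) \<noteq> col (hd es))"
  obtains f where "f \<in> E" "last vs \<in> ends f" "col f \<noteq> col (last es)" "chi (vs, es) f + 1 \<le> x f"
proof (rule ccontr)
  note extension = that
  assume no_ext: "\<not> thesis"
  let ?v = "last vs" and ?r = "\<lambda>e. x e - chi (vs, es) e" and ?c = "col_sign (col (last es))"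
  let ?S = "\<Sum>e\<in>{e\<in>E. ?v \<in> ends e}. ?r e"
  have "?v \<in> V" using walk_vertices[OF w] walk_length[OF w] by (metis last_in_set length_0_conv nat.distinct(1) subsetD)
  have r_zero: "?r e = 0" if e: "e \<in> E" "?v \<in> ends e" "col e \<noteq> col (last es)" for e
  proof -
    have "?r e \<in> \<int>" using x_int by (simp add: chi_def)
    moreover have "\<not> chi (vs, es) e + 1 \<le> x e" using no_ext extension[OF e] by blast
    then have "0 \<le> ?r e" "?r e < 1" using below by auto
    ultimately show ?thesis using Ints_nonzero_abs_ge1[of "?r e"] by auto
  qed
  have "balance ?r ?v = ?c * ?S"
    unfolding balance_def sum_distrib_left
    by (rule sum.cong) (use r_zero in \<open>auto simp: col_sign_def\<close>)
  moreover have "balance ?r ?v = - (col_sign (col (hd es)) * (if hd vs = ?v then 1 else 0) + ?c)"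
    using balance_diff[of x "chi (vs, es)" ?v] balance_chi[OF w ne ia, of ?v] x \<open>?v \<in> V\<close>
    by (simp add: alt_cone_iff)
  moreover have "hd vs = ?v \<Longrightarrow> col_sign (col (hd es)) = ?c" using not_CAW by auto
  moreover have "0 \<le> ?S" using below by (intro sum_nonneg) simp
  ultimately show False by (cases "col (last es)"; cases "hd vs = ?v") (auto simp: col_sign_def)
qed

lemma CAW_below_of_alt_walk:
  assumes x: "x \<in> alt_cone V E ends col" and x_int: "\<forall>e. x e \<in> \<int>"
  shows "walk V E ends (vs, es) \<Longrightarrow> es \<noteq> [] \<Longrightarrow> int_alternating col (vs, es) \<Longrightarrow>
    \<forall>e. chi (vs, es) e \<le> x e \<Longrightarrow> (\<Sum>e\<in>E. x e - chi (vs, es) e) = real n \<Longrightarrow>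
    \<exists>W. CAW V E ends col W \<and> (\<forall>e. chi W e \<le> x e)"
proof (induction n arbitrary: vs es rule: less_induct)
  case (less n)
  note w = less.prems(1) and ne = less.prems(2) and ia = less.prems(3) and below = less.prems(4)
  show ?case
  proof (cases "hd vs = last vs \<and> col (last es) \<noteq> col (hd es)")
    case True
    then have "CAW V E ends col (vs, es)" using w ne ia by (simp add: CAW_Pair_iff)
    then show ?thesis using below by blast
  next
    case False
    obtain f where f: "f \<in> E" "last vs \<in> ends f" "col f \<noteq> col (last es)" "chi (vs, es) f + 1 \<le> x f"
      using alt_walk_extension[OF x x_int w ne ia below False] .
    obtain y where y: "ends f = {last vs, y}" using ends_obtain_other[OF f(1,2)] by blast
    let ?W = "(vs @ [y], es @ [f])"
    have w': "walk V E ends ?W" using walk_snoc[OF w f(1) y] ends_subset_V[OF f(1)] y by simp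
    have ia': "int_alternating col ?W"
      by (rule int_alternating_append[OF ia]) (use f(3) in \<open>auto simp: int_alternating_Pair_iff\<close>)
    have chi': "chi ?W e = chi (vs, es) e + (if f = e then 1 else 0)" for e
      by (simp add: chi_def)
    have below': "\<forall>e. chi ?W e \<le> x e" using below f(4) chi' by auto
    have "(\<Sum>e\<in>E. x e - chi ?W e) = (\<Sum>e\<in>E. (x e - chi (vs, es) e) - (if f = e then 1 else 0))"
      using chi' by (simp add: algebra_simps)
    also have "\<dots> = real n - 1" using less.prems(5) f(1) finite_E by (simp add: sum_subtractf)
    finally have sum': "(\<Sum>e\<in>E. x e - chi ?W e) = real n - 1" .
    moreover have "0 \<le> (\<Sum>e\<in>E. x e - chi ?W e)" using below' by (intro sum_nonneg) simp
    ultimately have "n - 1 < n" "(\<Sum>e\<in>E. x e - chi ?W e) = real (n - 1)" by (simp_all add: of_nat_diff)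
    then show ?thesis using less.IH w' ia' below' by blast
  qed
qed

lemma CAW_below:
  assumes x: "x \<in> alt_cone V E ends col" and x_int: "\<forall>e. x e \<in> \<int>" and e0: "e0 \<in> E" "x e0 > 0"
  shows "\<exists>W. CAW V E ends col W \<and> (\<forall>e. chi W e \<le> x e)"
proof -
  obtain a b where ab: "ends e0 = {a, b}" "a \<noteq> b" using card_ends[OF e0(1)] card_2_iff by metis
  have w: "walk V E ends ([a, b], [e0])" using e0 ab ends_subset_V[OF e0(1)] by (simp add: walk_Pair_iff)
  have ia: "int_alternating col ([a, b], [e0])" by (simp add: int_alternating_Pair_iff)
  have "1 \<le> x e0" using Ints_nonzero_abs_ge1[of "x e0"] x_int e0(2) by simp
  then have below: "\<forall>e. chi ([a, b], [e0]) e \<le> x e" using alt_cone_nonneg[OF x] by (auto simp: chi_def)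
  have "(\<Sum>e\<in>E. x e - chi ([a, b], [e0]) e) \<in> \<int>" using x_int by (intro Ints_sum) (simp add: chi_def)
  moreover have "0 \<le> (\<Sum>e\<in>E. x e - chi ([a, b], [e0]) e)" using below by (intro sum_nonneg) simp
  ultimately obtain n where "(\<Sum>e\<in>E. x e - chi ([a, b], [e0]) e) = real n"
    using nonneg_Ints_eq_real_nat by blast
  from CAW_below_of_alt_walk[OF x x_int w _ ia below this] show ?thesis by simp
qed

lemma integral_alt_cone_CAW_sum:
  assumes "x \<in> alt_cone V E ends col" "\<forall>e. x e \<in> \<int>"
  shows "\<exists>Ws. (\<forall>W\<in>set Ws. CAW V E ends col W) \<and> x = (\<lambda>e. \<Sum>W\<leftarrow>Ws. chi W e)"
proof -
  have "(\<Sum>e\<in>E. x e) \<in> \<int>" "0 \<le> (\<Sum>e\<in>E. x e)"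
    using assms by (auto intro: Ints_sum sum_nonneg simp: alt_cone_iff)
  then obtain n where "(\<Sum>e\<in>E. x e) = real n" using nonneg_Ints_eq_real_nat by blast
  with assms show ?thesis
  proof (induction n arbitrary: x rule: less_induct)
    case (less n)
    show ?case
    proof (cases "\<exists>e0\<in>E. x e0 > 0")
      case False
      then have "x = (\<lambda>e. 0)" using less.prems(1) by (force simp: alt_cone_iff fun_eq_iff)
      then show ?thesis by (intro exI[of _ "[]"]) simp
    next
      case True
      then obtain W where W: "CAW V E ends col W" "\<forall>e. chi W e \<le> x e"
        using CAW_below[OF less.prems(1,2)] by blast
      define x' where "x' = (\<lambda>e. x e - chi W e)"
      have x': "x' \<in> alt_cone V E ends col" "\<forall>e. x' e \<in> \<int>"
        using alt_cone_diff[OF less.prems(1) CAW_chi_in_alt_cone[OF W(1)]] W(2) less.prems(2)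
        by (auto simp: x'_def chi_def)
      have "0 < length (snd W)" using W(1) by (simp add: CAW_def)
      moreover have "(\<Sum>e\<in>E. x' e) = real n - real (length (snd W))"
        using sum_chi_eq_length[of W] W(1) less.prems(3) by (simp add: x'_def sum_subtractf CAW_def)
      moreover have "0 \<le> (\<Sum>e\<in>E. x' e)" using x'(1) by (auto intro: sum_nonneg simp: alt_cone_iff)
      ultimately have "n - length (snd W) < n" "(\<Sum>e\<in>E. x' e) = real (n - length (snd W))"
        by (simp_all add: of_nat_diff del: length_greater_0_conv)
      then obtain Ws where "\<forall>W\<in>set Ws. CAW V E ends col W" "x' = (\<lambda>e. \<Sum>W\<leftarrow>Ws. chi W e)"
        using less.IH x' by blast
      moreover have "x = (\<lambda>e. chi W e + x' e)" by (simp add: x'_def)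
      ultimately show ?thesis using W(1) by (intro exI[of _ "W # Ws"]) auto
    qed
  qed
qed

lemma integral_alt_cone_irreducible_CAW_sum:
  assumes "x \<in> alt_cone V E ends col" "\<forall>e. x e \<in> \<int>"
  shows "\<exists>Ws. (\<forall>W\<in>set Ws. irreducible_CAW V E ends col W) \<and> x = (\<lambda>e. \<Sum>W\<leftarrow>Ws. chi W e)"
proof -
  obtain Ws where "\<forall>W\<in>set Ws. CAW V E ends col W" "x = (\<lambda>e. \<Sum>W\<leftarrow>Ws. chi W e)"
    using integral_alt_cone_CAW_sum[OF assms] by blast
  then show ?thesis
    using chi_sum_irreducible_decomposition[of "CAW V E ends col" Ws]
    by (auto simp: CAW_def irreducible_CAW_def)
qed

lemma binary_alt_cone_irreducible_CAT_sum:
  assumes x: "x \<in> alt_cone V E ends col" and x01: "\<forall>e. x e \<in> {0, 1}"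
  shows "\<exists>Ts. (\<forall>T\<in>set Ts. irreducible_CAT V E ends col T) \<and> x = (\<lambda>e. \<Sum>T\<leftarrow>Ts. chi T e)"
proof -
  have "\<forall>e. x e \<in> \<int>" using x01 by (metis Ints_0 Ints_1 insertE singletonD)
  then obtain Ws where Ws: "\<forall>W\<in>set Ws. CAW V E ends col W" and x_sum: "x = (\<lambda>e. \<Sum>W\<leftarrow>Ws. chi W e)"
    using integral_alt_cone_CAW_sum[OF x] by blast
  have "CAT V E ends col W" if W: "W \<in> set Ws" for W
  proof -
    have below: "chi W e \<le> x e" for e
      unfolding x_sum using W by (intro member_le_sum_list) (auto simp: chi_def)
    have "real (count_list (snd W) e) \<le> 1" for e using below[of e] x01[rule_format, of e] by (auto simp: chi_def)
    then have "count_list (snd W) e \<le> 1" for e by simp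
    then show ?thesis using Ws W by (auto simp: CAT_def trail_def intro: distinct_if_count_list_le_1)
  qed
  then show ?thesis
    using x_sum chi_sum_irreducible_decomposition[of "CAT V E ends col" Ws]
    by (auto simp: CAT_def CAW_def irreducible_CAT_def)
qed

section \<open>Alternating circuits\<close>

definition alt_path_in :: "'e set \<Rightarrow> 'v list \<Rightarrow> 'e list \<Rightarrow> bool" where
  "alt_path_in H vs es \<longleftrightarrow> walk V E ends (vs, es) \<and> set es \<subseteq> H \<and> int_alternating col (vs, es) \<and> distinct vs"

definition alt_extendable :: "'e set \<Rightarrow> bool" where
  "alt_extendable H \<longleftrightarrow> (\<forall>v e. e \<in> H \<and> v \<in> ends e \<longrightarrow> (\<exists>f\<in>H. v \<in> ends f \<and> col f \<noteq> col e))"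

lemma alt_path_in_length_le: "alt_path_in H vs es \<Longrightarrow> length vs \<le> card V"
  using finite_V walk_vertices by (metis alt_path_in_def card_mono distinct_card)

lemma alt_path_in_snoc:
  assumes p: "alt_path_in H vs es" and f: "f \<in> H" "H \<subseteq> E" "ends f = {last vs, y}" and y: "y \<notin> set vs"
    and c: "es \<noteq> [] \<Longrightarrow> col f \<noteq> col (last es)"
  shows "alt_path_in H (vs @ [y]) (es @ [f])"
proof -
  have "walk V E ends (vs @ [y], es @ [f])"
    using p f ends_subset_V[of f] by (intro walk_snoc) (auto simp: alt_path_in_def)
  moreover have "int_alternating col (vs @ [y], es @ [f])"
    using p c by (intro int_alternating_append) (auto simp: alt_path_in_def int_alternating_Pair_iff)
  ultimately show ?thesis using p f y by (auto simp: alt_path_in_def)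
qed

lemma alt_path_in_close:
  assumes p: "alt_path_in H vs es" and ne: "es \<noteq> []" and f: "f \<in> H" "H \<subseteq> E" "ends f = {last vs, y}"
    and c: "col f \<noteq> col (last es)" and i: "i < length es" "vs ! i = y"
  defines "C \<equiv> (drop i vs @ [y], drop i es @ [f])"
  shows "walk V E ends C" "cycle C" "int_alternating col C" "set (snd C) \<subseteq> H" "hd (fst C) = y"
    "hd (snd C) = es ! i"
proof -
  have w: "walk V E ends (vs, es)" and ia: "int_alternating col (vs, es)" and d: "distinct vs"
    and H: "set es \<subseteq> H" using p by (auto simp: alt_path_in_def)
  have l: "length vs = Suc (length es)" by (rule walk_length[OF w])
  show "walk V E ends C" unfolding C_def
    using i l f ends_subset_V[of f] by (intro walk_snoc walk_drop w) (auto simp: last_drop)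
  have "f \<notin> set (drop i es)"
  proof
    assume "f \<in> set (drop i es)"
    then obtain j where j: "i \<le> j" "j < length es" "es ! j = f" by (auto simp: in_set_drop_conv_nth)
    have "length es = j \<or> length es = Suc j" "i = j \<or> i = Suc j"
      using path_nth_mem_ends[OF w d j(2), of "length es"] path_nth_mem_ends[OF w d j(2), of i]
        walk_last_conv_nth[OF w] f(3) i j(3) l by auto
    then have "f = last es" using j by (auto simp: last_conv_nth ne)
    then show False using c by simp
  qed
  then show "cycle C" unfolding cycle_def closed_walk_def C_def
    using i l d distinct_edges_if_distinct_vertices[OF w d] by (auto simp: hd_drop_conv_nth butlast_append)
  show "int_alternating col C" unfolding C_def
    by (rule int_alternating_append[OF int_alternating_drop[OF ia]])
      (use i c in \<open>auto simp: int_alternating_Pair_iff last_drop\<close>)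
  show "set (snd C) \<subseteq> H" "hd (fst C) = y" "hd (snd C) = es ! i"
    using H f i l by (auto simp: C_def hd_drop_conv_nth dest: in_set_dropD)
qed

lemma alt_cycle_or_odd_cycle_from_path:
  assumes H: "alt_extendable H" "H \<subseteq> E"
  shows "alt_path_in H vs es \<Longrightarrow> es \<noteq> [] \<Longrightarrow>
    (\<exists>C. alt_cycle V E ends col C \<and> set (snd C) \<subseteq> H) \<or> (\<exists>C u. odd_ia_cycle V E ends col C u \<and> set (snd C) \<subseteq> H)"
proof (induction "card V - length vs" arbitrary: vs es rule: less_induct)
  case less
  note p = less.prems(1) and ne = less.prems(2)
  have w: "walk V E ends (vs, es)" and "set es \<subseteq> H" using p by (auto simp: alt_path_in_def)
  then have "last es \<in> H" "last vs \<in> ends (last es)" using ne walk_last_mem_ends_last by auto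
  then obtain f where f: "f \<in> H" "last vs \<in> ends f" "col f \<noteq> col (last es)"
    using H(1) by (auto simp: alt_extendable_def)
  obtain y where y: "y \<noteq> last vs" "ends f = {last vs, y}" using ends_obtain_other f(1,2) H(2) by blast
  show ?case
  proof (cases "y \<in> set vs")
    case False
    have p': "alt_path_in H (vs @ [y]) (es @ [f])" by (rule alt_path_in_snoc[OF p f(1) H(2) y(2) False]) (use f(3) in simp)
    then have "card V - length (vs @ [y]) < card V - length vs" using alt_path_in_length_le by fastforce
    then show ?thesis using less.hyps[OF _ p'] by simp
  next
    case True
    then obtain i where i: "i < length vs" "vs ! i = y" by (auto simp: in_set_conv_nth)
    have "i \<noteq> length es" using y(1) i walk_last_conv_nth[OF w] by auto
    then have "i < length es" using i walk_length[OF w] by simp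
    note C = alt_path_in_close[OF p ne f(1) H(2) y(2) f(3) this i(2)]
    show ?thesis using int_alternating_cycle_cases[OF C(1-3)] C(4) by blast
  qed
qed

lemma alt_cycle_through_odd_cycle:
  assumes C1: "odd_ia_cycle V E ends col (cv, ce) u" and H1: "set ce \<subseteq> H" and HE: "H \<subseteq> E"
    and p: "alt_path_in H qs qe" and hq: "hd qs = u" and dj: "set qs \<inter> set cv = {u}"
    and hc: "qe \<noteq> [] \<Longrightarrow> col (hd qe) \<noteq> col (hd ce)"
    and f: "f \<in> H" "ends f = {last qs, cv ! s}" and s: "0 < s" "s < length ce"
    and col_f: "qe = [] \<Longrightarrow> col f \<noteq> col (hd ce)" "qe \<noteq> [] \<Longrightarrow> col f \<noteq> col (last qe)"
      "col f \<noteq> col (ce ! s)"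
  shows "alt_cycle V E ends col (qs @ drop s cv, qe @ f # drop s ce)" "set (qe @ f # drop s ce) \<subseteq> H"
proof -
  note C = odd_ia_cycleD[OF C1]
  have wq: "walk V E ends (qs, qe)" and Hq: "set qe \<subseteq> H" and iaq: "int_alternating col (qs, qe)"
    and dq: "distinct qs" using p by (auto simp: alt_path_in_def)
  have lc: "length cv = Suc (length ce)" by (rule walk_length[OF C(1)])
  have qne: "qs \<noteq> []" using walk_length[OF wq] by auto
  have y: "cv ! s \<noteq> u" "cv ! s \<in> set cv" using odd_ia_cycle_nth_neq_base[OF C1 s] s lc by auto
  then have "cv ! s \<notin> set qs" using dj by blast
  have dcv: "drop s cv = cv ! s # drop (Suc s) cv" using s lc by (simp add: Cons_nth_drop_Suc)
  have "walk V E ends (qs @ [cv ! s], qe @ [f])"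
    using f HE ends_subset_V[of f] by (intro walk_snoc wq) auto
  from walk_append[OF this walk_drop[OF C(1)], of s]
  have walk: "walk V E ends (qs @ drop s cv, qe @ f # drop s ce)" using s dcv by simp
  have "f \<notin> set qe" using walk_edge_mem(2)[OF wq] f(2) \<open>cv ! s \<notin> set qs\<close> by auto
  moreover have "f \<notin> set (drop s ce)"
  proof
    assume f_arc: "f \<in> set (drop s ce)"
    then obtain j where j: "s \<le> j" "j < length ce" "ce ! j = f" by (auto simp: in_set_drop_conv_nth)
    have "last qs \<in> {cv ! j, cv ! Suc j}" using walk_nth_ends[OF C(1) j(2)] j(3) f(2) by auto
    then have "last qs \<in> set qs \<inter> set cv" using lc qne j(2) by auto
    then have last_u: "last qs = u" using dj by blast
    then have "qe = []" using dq qne hq walk_length[OF wq] by (cases qs) (auto split: if_splits)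
    have "f \<noteq> hd ce" using C(3,4) f_arc s by (auto simp: hd_conv_nth in_set_drop_conv_nth nth_eq_iff_index_eq)
    then have "f = last ce"
      using odd_ia_cycle_edges_at_base(1)[OF C1] f_arc f(2) last_u by (auto dest: in_set_dropD)
    then show False using col_f(1)[OF \<open>qe = []\<close>] C(8) by simp
  qed
  moreover have "set qe \<inter> set (drop s ce) = {}"
    using walks_disjoint_edges[OF wq C(1)] dj by (auto dest: in_set_dropD)
  ultimately have edges_distinct: "distinct (qe @ f # drop s ce)"
    using distinct_edges_if_distinct_vertices[OF wq dq] C(3) by auto
  have "u \<notin> set (drop s (butlast cv))"
    using odd_ia_cycle_nth_neq_base[OF C1] s lc by (auto simp: in_set_drop_conv_nth nth_butlast)
  moreover have "set (drop s (butlast cv)) \<subseteq> set cv" by (meson in_set_butlastD in_set_dropD subsetI)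
  ultimately have "set qs \<inter> set (drop s (butlast cv)) = {}" using dj by auto
  moreover have "distinct (drop s (butlast cv))" using C1 by (auto simp: odd_ia_cycle_def cycle_def)
  moreover have "butlast (qs @ drop s cv) = qs @ drop s (butlast cv)"
    using s lc by (simp add: butlast_append drop_butlast)
  moreover have "last (qs @ drop s cv) = u" "hd (qs @ drop s cv) = u"
    using C(7) s lc hq qne by (simp_all add: last_drop)
  ultimately have cycle: "cycle (qs @ drop s cv, qe @ f # drop s ce)"
    using dq edges_distinct by (simp add: cycle_def closed_walk_def)
  have "int_alternating col (qs @ [cv ! s], qe @ [f])"
    by (rule int_alternating_append[OF iaq]) (use col_f(2) in \<open>auto simp: int_alternating_Pair_iff\<close>)
  then have "int_alternating col (qs @ drop s cv, (qe @ [f]) @ drop s ce)"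
    by (rule int_alternating_append[OF _ int_alternating_drop[OF C(2)]])
      (use col_f(3) s in \<open>auto simp: hd_drop_conv_nth\<close>)
  moreover have "col (last (qe @ f # drop s ce)) \<noteq> col (hd (qe @ f # drop s ce))"
    using hc col_f(1) C(8) s by (cases qe) (auto simp: last_drop)
  ultimately have alt: "alternating col (qs @ drop s cv, qe @ f # drop s ce)"
    by (simp add: alternating_def)
  then show "alt_cycle V E ends col (qs @ drop s cv, qe @ f # drop s ce)"
    using walk cycle alternating_closed_even_length[OF alt] by (simp add: alt_cycle_def cycle_def)
  show "set (qe @ f # drop s ce) \<subseteq> H" using Hq f H1 by (auto dest: in_set_dropD)
qed

text \<open>If the closing edge has the colour of the cycle edge leaving its end, it differs from
  the colour of the edge entering it, and the cycle is traversed the other way round.\<close>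
lemma alt_cycle_from_path_to_odd_cycle:
  assumes C1: "odd_ia_cycle V E ends col (cv, ce) u" and H1: "set ce \<subseteq> H" and HE: "H \<subseteq> E"
    and p: "alt_path_in H qs qe" and hq: "hd qs = u" and dj: "set qs \<inter> set cv = {u}"
    and hc: "qe \<noteq> [] \<Longrightarrow> col (hd qe) \<noteq> col (hd ce)"
    and f: "f \<in> H" "ends f = {last qs, cv ! s}" and s: "0 < s" "s < length ce"
    and col_f: "qe = [] \<Longrightarrow> col f \<noteq> col (hd ce)" "qe \<noteq> [] \<Longrightarrow> col f \<noteq> col (last qe)"
  shows "\<exists>W. alt_cycle V E ends col W \<and> set (snd W) \<subseteq> H"
proof (cases "col f = col (ce ! s)")
  case False
  from alt_cycle_through_odd_cycle[OF C1 H1 HE p hq dj hc f s col_f False] show ?thesis by fastforce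
next
  case True
  note C = odd_ia_cycleD[OF C1]
  let ?s = "length ce - s"
  have "col (ce ! (s - 1)) \<noteq> col (ce ! s)" using int_alternating_nth[OF C(2), of "s - 1"] s by simp
  then have "col f \<noteq> col (rev ce ! ?s)" using True s by (simp add: rev_nth)
  moreover have "ends f = {last qs, rev cv ! ?s}" using f(2) s walk_length[OF C(1)] by (simp add: rev_nth)
  moreover have "col (hd (rev ce)) = col (hd ce)" using C(8) by (simp add: hd_rev)
  moreover have "0 < ?s" "?s < length (rev ce)" using s by auto
  ultimately have "alt_cycle V E ends col (qs @ drop ?s (rev cv), qe @ f # drop ?s (rev ce))"
    "set (qe @ f # drop ?s (rev ce)) \<subseteq> H"
    using alt_cycle_through_odd_cycle[OF odd_ia_cycle_rev[OF C1] _ HE p hq _ _ f(1)] H1 dj hc col_f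
    by simp_all
  then show ?thesis by (intro exI[of _ "(qs @ drop ?s (rev cv), qe @ f # drop ?s (rev ce))"]) simp
qed

lemma alt_bicycle_from_odd_lasso:
  assumes C1: "odd_ia_cycle V E ends col (cv, ce) u" and H1: "set ce \<subseteq> H"
    and p: "alt_path_in H qs qe" and hq: "hd qs = u" and dj: "set qs \<inter> set cv = {u}"
    and hc: "qe \<noteq> [] \<Longrightarrow> col (hd qe) \<noteq> col (hd ce)"
    and f: "f \<in> H" and l: "l < length qe" "qs ! l = y"
    and C2: "odd_ia_cycle V E ends col (drop l qs @ [y], drop l qe @ [f]) y"
  shows "\<exists>W. alt_bicycle V E ends col W \<and> set (snd W) \<subseteq> H"
proof -
  have wq: "walk V E ends (qs, qe)" and Hq: "set qe \<subseteq> H" and iaq: "int_alternating col (qs, qe)"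
    and dq: "distinct qs" using p by (auto simp: alt_path_in_def)
  have lq: "length qs = Suc (length qe)" by (rule walk_length[OF wq])
  define pv pe where "pv = take (Suc l) qs" and "pe = take l qe"
  have "walk V E ends (pv, pe)" using walk_take[OF wq, of l] l by (simp add: pv_def pe_def)
  moreover have "path (pv, pe)"
    using distinct_edges_if_distinct_vertices[OF wq dq] dq by (simp add: pv_def pe_def path_def)
  moreover have "hd pv = u" using hq walk_nonempty[OF wq] by (cases qs) (auto simp: pv_def)
  moreover have "last pv = y" using l lq by (simp add: pv_def take_Suc_conv_app_nth)
  moreover have "int_alternating col (pv, pe)" unfolding pe_def by (rule int_alternating_take[OF iaq])
  moreover have "u \<in> set pv" using hq walk_nonempty[OF wq] by (cases qs) (auto simp: pv_def)
  then have "set cv \<inter> set pv = {u}" using dj set_take_subset[of "Suc l" qs] by (auto simp: pv_def)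
  moreover have y_drop: "y \<in> set (drop l qs)" using l lq unfolding in_set_drop_conv_nth by (intro exI[of _ l]) auto
  then have "set pv \<inter> set (drop l qs @ [y]) = {y}"
    using set_take_disj_set_drop_if_distinct[OF dq, of l l] l lq by (auto simp: pv_def take_Suc_conv_app_nth)
  moreover have "set cv \<inter> set (drop l qs @ [y]) \<subseteq> {u} \<inter> {y}"
  proof (cases "l = 0")
    case True
    then show ?thesis using l hq dj walk_nonempty[OF wq] by (auto simp: hd_conv_nth)
  next
    case False
    then have "u \<notin> set (drop l qs)"
      using hq dq walk_nonempty[OF wq] by (auto simp: in_set_drop_conv_nth hd_conv_nth nth_eq_iff_index_eq)
    then show ?thesis using dj set_drop_subset[of l qs] y_drop by auto
  qed
  moreover have "hd (drop l qe @ [f]) = qe ! l" using l by (simp add: hd_drop_conv_nth)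
  moreover have "hd pe = hd qe" "last pe = qe ! (l - 1)" "col (qe ! (l - 1)) \<noteq> col (qe ! l)" if "pe \<noteq> []"
    using that l int_alternating_nth[OF iaq, of "l - 1"] by (auto simp: pe_def hd_conv_nth last_conv_nth)
  ultimately have "alt_bicycle V E ends col
      (walk_concat (walk_concat (walk_concat (cv, ce) (pv, pe)) (drop l qs @ [y], drop l qe @ [f])) (walk_rev (pv, pe)))"
    using hc l by (intro alt_bicycleI[OF C1 C2]) (auto simp: pe_def hd_conv_nth)
  moreover have "set (ce @ pe @ (drop l qe @ [f]) @ rev pe) \<subseteq> H"
    using H1 Hq f by (auto simp: pe_def dest: in_set_takeD in_set_dropD)
  ultimately show ?thesis by (force simp: walk_concat_def walk_rev_def)
qed

abbreviation alt_circuit :: "('v, 'e) walk \<Rightarrow> bool" where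
  "alt_circuit W \<equiv> alt_cycle V E ends col W \<or> alt_bicycle V E ends col W"

lemma alt_circuit_CAW: "alt_circuit W \<Longrightarrow> CAW V E ends col W"
  by (auto simp: alt_cycle_def CAW_def cycle_def elim!: alt_bicycleE dest: odd_ia_cycleD(4))

lemma alt_circuit_from_lasso:
  assumes C1: "odd_ia_cycle V E ends col (cv, ce) u" and H1: "set ce \<subseteq> H" and HE: "H \<subseteq> E"
    and p: "alt_path_in H qs qe" and hq: "hd qs = u" and dj: "set qs \<inter> set cv = {u}"
    and hc: "qe \<noteq> [] \<Longrightarrow> col (hd qe) \<noteq> col (hd ce)"
    and f: "f \<in> H" "ends f = {last qs, y}" "qe \<noteq> [] \<Longrightarrow> col f \<noteq> col (last qe)"
    and l: "l < length qe" "qs ! l = y"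
  shows "\<exists>W. alt_circuit W \<and> set (snd W) \<subseteq> H"
proof -
  have qe_ne: "qe \<noteq> []" using l by auto
  note C2 = alt_path_in_close[OF p qe_ne f(1) HE f(2) f(3)[OF qe_ne] l]
  show ?thesis
  proof (cases "even (length (drop l qe @ [f]))")
    case True
    then have "alt_cycle V E ends col (drop l qs @ [y], drop l qe @ [f])"
      using int_alternating_cycle_cases(1)[OF C2(1-3)] by simp
    then show ?thesis using C2(4) by (intro exI[of _ "(drop l qs @ [y], drop l qe @ [f])"]) simp
  next
    case False
    then have "odd_ia_cycle V E ends col (drop l qs @ [y], drop l qe @ [f]) y"
      using int_alternating_cycle_cases(2)[OF C2(1-3)] C2(5) by simp
    from alt_bicycle_from_odd_lasso[OF C1 H1 p hq dj hc f(1) l this] show ?thesis by blast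
  qed
qed

text \<open>Grow an alternating path from the base of an odd cycle. It either returns to the cycle,
  closing an even alternating cycle (in one of the two directions around the cycle), or runs into
  itself, closing an even cycle or a second odd cycle, and the two odd cycles form a bicycle.\<close>
lemma alt_circuit_from_odd_cycle:
  assumes H: "alt_extendable H" "H \<subseteq> E" and C1: "odd_ia_cycle V E ends col (cv, ce) u" and H1: "set ce \<subseteq> H"
  shows "alt_path_in H qs qe \<Longrightarrow> hd qs = u \<Longrightarrow> set qs \<inter> set cv = {u} \<Longrightarrow>
    (qe \<noteq> [] \<Longrightarrow> col (hd qe) \<noteq> col (hd ce)) \<Longrightarrow> \<exists>W. alt_circuit W \<and> set (snd W) \<subseteq> H"
proof (induction "card V - length qs" arbitrary: qs qe rule: less_induct)
  case less
  note p = less.prems(1) and hq = less.prems(2) and dj = less.prems(3) and hc = less.prems(4)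
  note C = odd_ia_cycleD[OF C1]
  have wq: "walk V E ends (qs, qe)" and Hq: "set qe \<subseteq> H" using p by (auto simp: alt_path_in_def)
  have lq: "length qs = Suc (length qe)" by (rule walk_length[OF wq])
  define ec where "ec = (if qe = [] then hd ce else last qe)"
  have "ec \<in> H" using H1 Hq C(4) by (auto simp: ec_def)
  moreover have "last qs \<in> ends ec"
  proof (cases "qe = []")
    case True
    then have "last qs = cv ! 0" using lq hq C(5) by (cases qs) auto
    then show ?thesis using walk_nth_ends[OF C(1), of 0] C(4) True by (simp add: ec_def hd_conv_nth)
  qed (use walk_last_mem_ends_last[OF wq] in \<open>simp add: ec_def\<close>)
  ultimately obtain f where f: "f \<in> H" "last qs \<in> ends f" "col f \<noteq> col ec"
    using H(1) by (auto simp: alt_extendable_def)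
  obtain y where y: "y \<noteq> last qs" "ends f = {last qs, y}" using ends_obtain_other f(1,2) H(2) by blast
  have col_f: "qe = [] \<Longrightarrow> col f \<noteq> col (hd ce)" "qe \<noteq> [] \<Longrightarrow> col f \<noteq> col (last qe)"
    using f(3) by (auto simp: ec_def)
  consider (on_path) "y \<in> set qs" | (on_cycle) "y \<notin> set qs" "y \<in> set cv" | (new) "y \<notin> set qs" "y \<notin> set cv"
    by blast
  then show ?case
  proof cases
    case on_path
    then obtain l where l: "l < length qs" "qs ! l = y" by (auto simp: in_set_conv_nth)
    have "l \<noteq> length qe" using l y(1) walk_last_conv_nth[OF wq] by auto
    then have l': "l < length qe" using l lq by simp
    from alt_circuit_from_lasso[OF C1 H1 H(2) p hq dj hc f(1) y(2) col_f(2) l' l(2)] show ?thesis by blast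
  next
    case on_cycle
    then obtain s where s: "s < length cv" "cv ! s = y" by (auto simp: in_set_conv_nth)
    have "y \<noteq> u" using on_cycle hq walk_nonempty[OF wq] by auto
    then have "s \<noteq> 0" "s \<noteq> length ce" using s C(5,6) by (metis, metis)
    then have s': "0 < s" "s < length ce" using s walk_length[OF C(1)] by auto
    from alt_cycle_from_path_to_odd_cycle[OF C1 H1 H(2) p hq dj hc f(1) _ s' col_f] y(2) s(2)
    show ?thesis by blast
  next
    case new
    have p': "alt_path_in H (qs @ [y]) (qe @ [f])" by (rule alt_path_in_snoc[OF p f(1) H(2) y(2) new(1) col_f(2)])
    moreover have "card V - length (qs @ [y]) < card V - length qs" using alt_path_in_length_le[OF p'] by simp
    moreover have "hd (qs @ [y]) = u" "set (qs @ [y]) \<inter> set cv = {u}"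
      using hq dj new walk_nonempty[OF wq] by auto
    moreover have "col (hd (qe @ [f])) \<noteq> col (hd ce)" using hc col_f(1) by (cases qe) auto
    ultimately show ?thesis using less.hyps by blast
  qed
qed

lemma alt_circuit_in_alt_extendable:
  assumes H: "alt_extendable H" "H \<subseteq> E" "H \<noteq> {}"
  shows "\<exists>W. alt_circuit W \<and> set (snd W) \<subseteq> H"
proof -
  obtain e0 where e0: "e0 \<in> H" using H(3) by blast
  obtain a b where ab: "ends e0 = {a, b}" "a \<noteq> b" using card_ends e0 H(2) card_2_iff by (metis subsetD)
  have "alt_path_in H [a, b] [e0]"
    using e0 H(2) ab ends_subset_V[of e0] by (auto simp: alt_path_in_def walk_Pair_iff int_alternating_Pair_iff)
  from alt_cycle_or_odd_cycle_from_path[OF H(1,2) this]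
  consider "\<exists>C. alt_cycle V E ends col C \<and> set (snd C) \<subseteq> H"
    | "\<exists>cv ce u. odd_ia_cycle V E ends col (cv, ce) u \<and> set ce \<subseteq> H" by fastforce
  then show ?thesis
  proof cases
    case 2
    then obtain cv ce u where C1: "odd_ia_cycle V E ends col (cv, ce) u" and H1: "set ce \<subseteq> H" by blast
    have "u \<in> V" using walk_vertices[OF odd_ia_cycleD(1)[OF C1]] odd_ia_cycleD(7)[OF C1]
      walk_nonempty[of V E ends "(cv, ce)"] odd_ia_cycleD(1)[OF C1] by auto
    then have "alt_path_in H [u] []" by (simp add: alt_path_in_def walk_Pair_iff int_alternating_Pair_iff)
    moreover have "set [u] \<inter> set cv = {u}" using odd_ia_cycleD(7)[OF C1] walk_nonempty[OF odd_ia_cycleD(1)[OF C1]] by auto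
    ultimately show ?thesis using alt_circuit_from_odd_cycle[OF H(1,2) C1 H1, of "[u]" "[]"] by simp
  qed blast
qed

lemma alt_cone_support_alt_extendable:
  assumes x: "x \<in> alt_cone V E ends col" shows "alt_extendable {e\<in>E. x e > 0}"
  unfolding alt_extendable_def
proof (intro allI impI)
  fix v e assume e: "e \<in> {e\<in>E. x e > 0} \<and> v \<in> ends e"
  let ?R = "{e\<in>E. v \<in> ends e \<and> col e = R}" and ?B = "{e\<in>E. v \<in> ends e \<and> col e = B}"
  have "(\<Sum>e\<in>?R. x e) = (\<Sum>e\<in>?B. x e)"
    using x e ends_subset_V[of e] balance_eq_red_minus_blue[of x v] by (auto simp: alt_cone_iff)
  moreover have "x e \<le> (\<Sum>e\<in>(if col e = R then ?R else ?B). x e)"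
    using e alt_cone_nonneg[OF x] finite_E by (cases "col e") (auto intro!: member_le_sum)
  moreover define Opp where "Opp = (if col e = R then ?B else ?R)"
  ultimately have "0 < (\<Sum>e\<in>Opp. x e)" using e by (auto split: if_splits)
  then obtain f where "f \<in> Opp" "0 < x f" by (metis not_le sum_nonpos)
  then show "\<exists>f\<in>{e\<in>E. x e > 0}. v \<in> ends f \<and> col f \<noteq> col e"
    by (cases "col e") (auto simp: Opp_def)
qed

section \<open>Extreme rays\<close>

lemma alt_cone_balance_on_support:
  assumes y: "y \<in> alt_cone V E ends col" "\<forall>e. e \<notin> S \<longrightarrow> y e = 0" and S: "S \<subseteq> E" and v: "v \<in> V"
  shows "(\<Sum>e\<in>{e\<in>S. v \<in> ends e}. col_sign (col e) * y e) = 0"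
proof -
  have "balance y v = (\<Sum>e\<in>{e\<in>S. v \<in> ends e}. col_sign (col e) * y e)"
    unfolding balance_def by (rule sum.mono_neutral_right) (use S y(2) finite_E in auto)
  then show ?thesis using y(1) v by (simp add: alt_cone_iff)
qed

lemma alt_cone_two_edges_at_vertex:
  assumes y: "y \<in> alt_cone V E ends col" "\<forall>e. e \<notin> S \<longrightarrow> y e = 0" and S: "S \<subseteq> E" and v: "v \<in> V"
    and inc: "{e\<in>S. v \<in> ends e} = {a, b}" and "a \<noteq> b" "col a \<noteq> col b"
  shows "y a = y b"
  using alt_cone_balance_on_support[OF y S v] assms(6,7)
  by (cases "col a"; cases "col b") (auto simp: inc col_sign_def)

lemma alt_cone_three_edges_at_vertex:
  assumes y: "y \<in> alt_cone V E ends col" "\<forall>e. e \<notin> S \<longrightarrow> y e = 0" and S: "S \<subseteq> E" and v: "v \<in> V"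
    and inc: "{e\<in>S. v \<in> ends e} = {a, b, g}" and "a \<noteq> b" "a \<noteq> g" "b \<noteq> g"
    and "col a = col b" "col a \<noteq> col g"
  shows "y a + y b = y g"
  using alt_cone_balance_on_support[OF y S v] assms(6-10)
  by (cases "col a"; cases "col g") (auto simp: inc col_sign_def)

lemma alt_cone_four_edges_at_vertex:
  assumes y: "y \<in> alt_cone V E ends col" "\<forall>e. e \<notin> S \<longrightarrow> y e = 0" and S: "S \<subseteq> E" and v: "v \<in> V"
    and inc: "{e\<in>S. v \<in> ends e} = {a, b, g, h}"
    and "a \<noteq> b" "a \<noteq> g" "a \<noteq> h" "b \<noteq> g" "b \<noteq> h" "g \<noteq> h"
    and "col a = col b" "col g = col h" "col a \<noteq> col g"
  shows "y a + y b = y g + y h"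
  using alt_cone_balance_on_support[OF y S v] assms(6-14)
  by (cases "col a"; cases "col g") (auto simp: inc col_sign_def)

text \<open>At an inner vertex the support meets only the two, oppositely coloured, walk edges,
  so the balance condition there makes their values equal.\<close>
lemma alt_cone_constant_along_walk:
  assumes w: "walk V E ends (vs, es)" and ia: "int_alternating col (vs, es)" and de: "distinct es"
    and S: "set es \<subseteq> S" "S \<subseteq> E" and y: "y \<in> alt_cone V E ends col" "\<forall>e. e \<notin> S \<longrightarrow> y e = 0"
    and simple: "\<And>a b. 0 < a \<Longrightarrow> a < length es \<Longrightarrow> b \<le> length es \<Longrightarrow> vs ! a = vs ! b \<Longrightarrow> a = b"
    and inner: "\<And>e j. e \<in> S \<Longrightarrow> 0 < j \<Longrightarrow> j < length es \<Longrightarrow> vs ! j \<in> ends e \<Longrightarrow> e \<in> set es"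
  shows "j < length es \<Longrightarrow> y (es ! j) = y (es ! 0)"
proof (induction j)
  case (Suc j)
  have "{e\<in>S. vs ! Suc j \<in> ends e} = {es ! j, es ! Suc j}"
  proof (intro equalityI subsetI)
    fix e assume e: "e \<in> {e\<in>S. vs ! Suc j \<in> ends e}"
    then obtain k where k: "k < length es" "es ! k = e" using inner[of e "Suc j"] Suc.prems by (auto simp: in_set_conv_nth)
    then have "vs ! Suc j \<in> {vs ! k, vs ! Suc k}" using walk_nth_ends[OF w k(1)] e by auto
    then have "Suc j = k \<or> Suc j = Suc k" using simple[of "Suc j" k] simple[of "Suc j" "Suc k"] Suc.prems k(1) by auto
    then show "e \<in> {es ! j, es ! Suc j}" using k(2) by auto
  qed (use walk_nth_ends[OF w, of j] walk_nth_ends[OF w, of "Suc j"] Suc.prems S(1) in auto)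
  moreover have "vs ! Suc j \<in> V" using walk_vertices[OF w] walk_length[OF w] Suc.prems by auto
  moreover have "es ! j \<noteq> es ! Suc j" using de Suc.prems by (simp add: nth_eq_iff_index_eq)
  ultimately have "y (es ! j) = y (es ! Suc j)"
    using alt_cone_two_edges_at_vertex[OF y S(2)] int_alternating_nth[OF ia Suc.prems] by blast
  then show ?case using Suc by simp
qed simp

lemma alt_cycle_support_ray:
  assumes C: "alt_cycle V E ends col (cv, ce)" and y: "y \<in> alt_cone V E ends col" "\<forall>e. e \<notin> set ce \<longrightarrow> y e = 0"
  shows "y = (\<lambda>e. y (ce ! 0) * chi (cv, ce) e)"
proof
  fix e
  have w: "walk V E ends (cv, ce)" and cy: "cycle (cv, ce)" and ia: "int_alternating col (cv, ce)"
    and de: "distinct ce" and ne: "ce \<noteq> []" using C by (auto simp: alt_cycle_def alternating_def cycle_def)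
  have simple: "a = b" if "0 < a" "a < length ce" "b \<le> length ce" "cv ! a = cv ! b" for a b
    using walk_cycle_nth_inj[OF w cy, of a b] walk_cycle_nth_inj[OF w cy, of a 0] walk_cycle_nth_last[OF w cy] that ne
    by (cases "b = length ce") auto
  have "y (ce ! j) = y (ce ! 0)" if "j < length ce" for j
    using walk_edge_mem(1)[OF w] that
    by (intro alt_cone_constant_along_walk[OF w ia de subset_refl _ y simple]) auto
  then show "y e = y (ce ! 0) * chi (cv, ce) e"
    using y(2) de by (cases "e \<in> set ce") (auto simp: chi_Pair count_list_distinct in_set_conv_nth)
qed

lemma alt_cone_constant_on_odd_cycle:
  assumes C: "odd_ia_cycle V E ends col (cv, ce) u" and S: "set ce \<subseteq> S" "S \<subseteq> E"
    and y: "y \<in> alt_cone V E ends col" "\<forall>e. e \<notin> S \<longrightarrow> y e = 0"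
    and attached: "\<forall>e\<in>S - set ce. ends e \<inter> set cv \<subseteq> {u}"
    and j: "j < length ce"
  shows "y (ce ! j) = y (hd ce)"
proof -
  note D = odd_ia_cycleD[OF C]
  have "y (ce ! j) = y (ce ! 0)"
  proof (rule alt_cone_constant_along_walk[OF D(1,2,3) S y _ _ j])
    fix a b assume ab: "0 < a" "a < length ce" "b \<le> length ce" "cv ! a = cv ! b"
    have "cycle (cv, ce)" using C by (simp add: odd_ia_cycle_def)
    moreover have "b \<noteq> length ce" using odd_ia_cycle_nth_neq_base[OF C ab(1,2)] D(6) ab(4) by auto
    ultimately show "a = b" using walk_cycle_nth_inj[OF D(1) _ ab(2) _ ab(4)] ab(3) by simp
  next
    fix e k assume e: "e \<in> S" and k: "0 < k" "k < length ce" "cv ! k \<in> ends e"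
    show "e \<in> set ce"
    proof (rule ccontr)
      assume "e \<notin> set ce"
      moreover have "cv ! k \<in> set cv" using k(2) walk_length[OF D(1)] by simp
      ultimately have "cv ! k = u" using attached e k(3) by blast
      then show False using odd_ia_cycle_nth_neq_base[OF C k(1,2)] by simp
    qed
  qed
  then show ?thesis using D(4) by (simp add: hd_conv_nth)
qed

lemma alt_cone_constant_on_path:
  assumes w: "walk V E ends (pv, pe)" and d: "distinct pv" and ia: "int_alternating col (pv, pe)"
    and S: "set pe \<subseteq> S" "S \<subseteq> E" and y: "y \<in> alt_cone V E ends col" "\<forall>e. e \<notin> S \<longrightarrow> y e = 0"
    and attached: "\<forall>e\<in>S - set pe. ends e \<inter> set pv \<subseteq> {pv ! 0, pv ! length pe}"
    and j: "j < length pe"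
  shows "y (pe ! j) = y (pe ! 0)"
proof (rule alt_cone_constant_along_walk[OF w ia distinct_edges_if_distinct_vertices[OF w d] S y _ _ j])
  show "a = b" if "0 < a" "a < length pe" "b \<le> length pe" "pv ! a = pv ! b" for a b
    using that d walk_length[OF w] by (simp add: nth_eq_iff_index_eq)
  fix e k assume e: "e \<in> S" and k: "0 < k" "k < length pe" "pv ! k \<in> ends e"
  show "e \<in> set pe"
  proof (rule ccontr)
    assume "e \<notin> set pe"
    moreover have "pv ! k \<in> set pv" using k(2) walk_length[OF w] by simp
    ultimately have "pv ! k = pv ! 0 \<or> pv ! k = pv ! length pe" using attached e k(3) by blast
    then show False using k d walk_length[OF w] by (auto simp: nth_eq_iff_index_eq)
  qed
qed

lemma odd_cycle_base_three_edges:
  assumes C: "odd_ia_cycle V E ends col (cv, ce) u" and S: "set ce \<subseteq> S" "S \<subseteq> E"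
    and y: "y \<in> alt_cone V E ends col" "\<forall>e. e \<notin> S \<longrightarrow> y e = 0" and u: "u \<in> V"
    and inc: "{e\<in>S. u \<in> ends e} = {hd ce, last ce, g}" and g: "g \<notin> set ce" "col g \<noteq> col (hd ce)"
    and const: "y (last ce) = y (hd ce)"
  shows "y g = 2 * y (hd ce)"
proof -
  note D = odd_ia_cycleD[OF C]
  have "y (hd ce) + y (last ce) = y g"
    using alt_cone_three_edges_at_vertex[OF y S(2) u inc] odd_ia_cycle_edges_at_base(2)[OF C] g D(4,8) by auto
  then show ?thesis using const by simp
qed

context
  fixes cv1 ce1 pv pe cv2 ce2 u w vs and y :: "'e \<Rightarrow> real"
  assumes C1: "odd_ia_cycle V E ends col (cv1, ce1) u" and C2: "odd_ia_cycle V E ends col (cv2, ce2) w"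
    and P: "walk V E ends (pv, pe)" "distinct pv" "pv ! 0 = u" "pv ! length pe = w"
    and disj: "set cv1 \<inter> set pv = {u}" "set pv \<inter> set cv2 = {w}" "set cv1 \<inter> set cv2 \<subseteq> {u} \<inter> {w}"
    and ia: "int_alternating col (vs, ce1 @ pe @ ce2 @ rev pe)"
    and y: "y \<in> alt_cone V E ends col" "\<forall>e. e \<notin> set ce1 \<union> set pe \<union> set ce2 \<longrightarrow> y e = 0"
begin

lemma bicycle_edges_disjoint: "set ce1 \<inter> set pe = {}" "set pe \<inter> set ce2 = {}" "set ce1 \<inter> set ce2 = {}"
  using walks_disjoint_edges[OF odd_ia_cycleD(1)[OF C1] P(1)] walks_disjoint_edges[OF P(1) odd_ia_cycleD(1)[OF C2]]
    walks_disjoint_edges[OF odd_ia_cycleD(1)[OF C1] odd_ia_cycleD(1)[OF C2]] disj by auto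

lemma bicycle_constant_on_parts:
  shows "j < length ce1 \<Longrightarrow> y (ce1 ! j) = y (hd ce1)" "j < length ce2 \<Longrightarrow> y (ce2 ! j) = y (hd ce2)"
    "j < length pe \<Longrightarrow> y (pe ! j) = y (pe ! 0)"
proof -
  let ?S = "set ce1 \<union> set pe \<union> set ce2"
  note D1 = odd_ia_cycleD[OF C1] and D2 = odd_ia_cycleD[OF C2]
  have SE: "?S \<subseteq> E" using walk_edge_mem(1)[OF D1(1)] walk_edge_mem(1)[OF P(1)] walk_edge_mem(1)[OF D2(1)] by blast
  have ends1: "\<forall>e\<in>set ce1. ends e \<subseteq> set cv1" and endsP: "\<forall>e\<in>set pe. ends e \<subseteq> set pv"
    and ends2: "\<forall>e\<in>set ce2. ends e \<subseteq> set cv2"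
    using walk_edge_mem(2)[OF D1(1)] walk_edge_mem(2)[OF P(1)] walk_edge_mem(2)[OF D2(1)] by blast+
  have "\<forall>e\<in>?S - set ce1. ends e \<inter> set cv1 \<subseteq> {u}" using disj ends2 endsP by blast
  then show "j < length ce1 \<Longrightarrow> y (ce1 ! j) = y (hd ce1)"
    using alt_cone_constant_on_odd_cycle[OF C1 _ SE y] by blast
  have "\<forall>e\<in>?S - set ce2. ends e \<inter> set cv2 \<subseteq> {w}" using disj ends1 endsP by blast
  then show "j < length ce2 \<Longrightarrow> y (ce2 ! j) = y (hd ce2)"
    using alt_cone_constant_on_odd_cycle[OF C2 _ SE y] by blast
  have "\<forall>e\<in>?S - set pe. ends e \<inter> set pv \<subseteq> {pv ! 0, pv ! length pe}" using disj ends1 ends2 P(3,4) by blast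
  moreover have "int_alternating col (pv, pe)"
    using int_alternating_take[OF int_alternating_drop[OF ia, where i="length ce1"], where i="length pe"] by simp
  ultimately show "j < length pe \<Longrightarrow> y (pe ! j) = y (pe ! 0)"
    using alt_cone_constant_on_path[OF P(1,2) _ _ SE y] by blast
qed

text \<open>At the bases of the odd cycles three (or, if the path is empty, four) support edges meet.
  Their balance conditions force equal values on both cycles and twice that value on the path.\<close>
lemma bicycle_values_at_junctions:
  shows "y (hd ce2) = y (hd ce1)" "e \<in> set pe \<Longrightarrow> y e = 2 * y (hd ce1)"
proof -
  let ?S = "set ce1 \<union> set pe \<union> set ce2"
  note D1 = odd_ia_cycleD[OF C1] and D2 = odd_ia_cycleD[OF C2] and d = bicycle_edges_disjoint
  have SE: "?S \<subseteq> E" using walk_edge_mem(1)[OF D1(1)] walk_edge_mem(1)[OF P(1)] walk_edge_mem(1)[OF D2(1)] by blast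
  have u: "u \<in> set pv" "u \<in> V" and w: "w \<in> set pv" "w \<in> V" using disj walk_vertices[OF P(1)] by auto
  have last1: "y (last ce1) = y (hd ce1)" and last2: "y (last ce2) = y (hd ce2)"
    using bicycle_constant_on_parts(1)[of "length ce1 - 1"] bicycle_constant_on_parts(2)[of "length ce2 - 1"] D1(4) D2(4)
    by (simp_all add: last_conv_nth)
  have junction1: "col (last ce1) \<noteq> col (hd (pe @ ce2 @ rev pe))"
    using int_alternating_junction[OF ia] D1(4) D2(4) by simp
  have at_vertex: "{e\<in>?S. v \<in> ends e} = {e\<in>set ce1. v \<in> ends e} \<union> {e\<in>set pe. v \<in> ends e} \<union> {e\<in>set ce2. v \<in> ends e}"
    for v by auto
  have base1: "{e\<in>set ce1. u \<in> ends e} = {hd ce1, last ce1}" "hd ce1 \<noteq> last ce1"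
    and base2: "{e\<in>set ce2. w \<in> ends e} = {hd ce2, last ce2}" "hd ce2 \<noteq> last ce2"
    using odd_ia_cycle_edges_at_base[OF C1] odd_ia_cycle_edges_at_base[OF C2] by auto
  have "y (hd ce2) = y (hd ce1) \<and> (\<forall>e\<in>set pe. y e = 2 * y (hd ce1))"
  proof (cases "pe = []")
    case True
    then have "{e\<in>?S. u \<in> ends e} = {hd ce1, last ce1, hd ce2, last ce2}"
      using at_vertex[of u] base1 base2 P(3,4) by auto
    moreover have "hd ce1 \<noteq> hd ce2" "hd ce1 \<noteq> last ce2" "last ce1 \<noteq> hd ce2" "last ce1 \<noteq> last ce2"
      using d(3) hd_in_set[OF D1(4)] last_in_set[OF D1(4)] hd_in_set[OF D2(4)] last_in_set[OF D2(4)] by auto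
    moreover have "col (hd ce1) \<noteq> col (hd ce2)" using junction1 D1(8) True by simp
    ultimately have "y (hd ce1) + y (last ce1) = y (hd ce2) + y (last ce2)"
      using alt_cone_four_edges_at_vertex[OF y SE u(2)] base1(2) base2(2) D1(8) D2(8) by metis
    then show ?thesis using last1 last2 True by simp
  next
    case False
    have "u \<noteq> w" using P False by (auto simp: nth_eq_iff_index_eq dest: walk_length)
    then have "u \<notin> set cv2" "w \<notin> set cv1" using disj u w by blast+
    then have inc: "{e\<in>?S. u \<in> ends e} = {hd ce1, last ce1, hd pe}" "{e\<in>?S. w \<in> ends e} = {hd ce2, last ce2, last pe}"
      using at_vertex base1 base2 path_edges_at_ends[OF P(1,2) False] P(3,4)
        walk_edges_at_vertex_notin[OF D2(1)] walk_edges_at_vertex_notin[OF D1(1)] by auto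
    have notin: "hd pe \<notin> set ce1" "last pe \<notin> set ce2"
      using d hd_in_set[OF False] last_in_set[OF False] by auto
    have col_pe: "col (hd pe) \<noteq> col (hd ce1)" "col (last pe) \<noteq> col (hd ce2)"
      using junction1 int_alternating_junction[of col vs "ce1 @ pe" "ce2 @ rev pe"] ia D1(8) D2(4) False by simp_all
    have "set ce1 \<subseteq> ?S" "set ce2 \<subseteq> ?S" by auto
    note three = odd_cycle_base_three_edges[where g="hd pe", OF C1 this(1) SE y u(2) inc(1) notin(1) col_pe(1) last1]
      odd_cycle_base_three_edges[where g="last pe", OF C2 this(2) SE y w(2) inc(2) notin(2) col_pe(2) last2]
    have on_path: "y e = y (hd pe)" if "e \<in> set pe" for e
      using bicycle_constant_on_parts(3) that False by (metis hd_conv_nth in_set_conv_nth)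
    then have "y (last pe) = y (hd pe)" using last_in_set[OF False] by blast
    then show ?thesis using three on_path by simp
  qed
  then show "y (hd ce2) = y (hd ce1)" "e \<in> set pe \<Longrightarrow> y e = 2 * y (hd ce1)" by auto
qed

end

lemma alt_bicycle_support_ray:
  assumes W: "alt_bicycle V E ends col W" and y: "y \<in> alt_cone V E ends col" "\<forall>e. e \<notin> set (snd W) \<longrightarrow> y e = 0"
  shows "\<exists>\<alpha>. y = (\<lambda>e. \<alpha> * chi W e)"
proof -
  obtain cv1 ce1 pv pe cv2 ce2 u w where
    C1: "odd_ia_cycle V E ends col (cv1, ce1) u" and C2: "odd_ia_cycle V E ends col (cv2, ce2) w"
    and P: "walk V E ends (pv, pe)" "distinct pv" "pv ! 0 = u" "pv ! length pe = w"
    and disj: "set cv1 \<inter> set pv = {u}" "set pv \<inter> set cv2 = {w}" "set cv1 \<inter> set cv2 \<subseteq> {u} \<inter> {w}"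
    and sW: "snd W = ce1 @ pe @ ce2 @ rev pe" and aW: "alternating col W"
    using alt_bicycleE[OF W] by metis
  have "int_alternating col (fst W, ce1 @ pe @ ce2 @ rev pe)" using aW sW by (metis alternating_def prod.collapse)
  moreover have y': "\<forall>e. e \<notin> set ce1 \<union> set pe \<union> set ce2 \<longrightarrow> y e = 0" using y(2) sW by auto
  note parts = C1 C2 P disj calculation y(1) y'
  have "y e = y (hd ce1)" if "e \<in> set ce1 \<union> set ce2" for e
    using that bicycle_constant_on_parts(1,2)[OF parts] bicycle_values_at_junctions(1)[OF parts]
    by (metis Un_iff in_set_conv_nth)
  moreover have "distinct ce1" "distinct pe" "distinct ce2"
    using odd_ia_cycleD(3)[OF C1] distinct_edges_if_distinct_vertices[OF P(1,2)] odd_ia_cycleD(3)[OF C2] .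
  then have "chi W e = (if e \<in> set ce1 \<union> set ce2 then 1 else if e \<in> set pe then 2 else 0)" for e
    using bicycle_edges_disjoint[OF parts] by (auto simp: chi_def sW count_list_distinct)
  ultimately have "y e = y (hd ce1) * chi W e" for e
    using bicycle_values_at_junctions(2)[OF parts] y' by auto
  then show ?thesis by blast
qed

lemma alt_circuit_support_ray:
  assumes W: "alt_circuit W" and y: "y \<in> alt_cone V E ends col" "\<forall>e. e \<notin> set (snd W) \<longrightarrow> y e = 0"
  shows "\<exists>\<alpha>. y = (\<lambda>e. \<alpha> * chi W e)"
  using W alt_cycle_support_ray[of "fst W" "snd W" y] alt_bicycle_support_ray[of W y] y by auto

text \<open>A summand of a vector on the ray is supported by the circuit, hence on the ray itself.\<close>
lemma alt_circuit_ray_summand: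
  assumes W: "alt_circuit W" and y: "y \<in> alt_cone V E ends col" and z: "z \<in> alt_cone V E ends col"
    and sum: "(\<lambda>e. y e + z e) \<in> ray (chi W)"
  shows "y \<in> ray (chi W)"
proof -
  obtain s where s: "(\<lambda>e. y e + z e) = (\<lambda>e. s * chi W e)" using sum by (auto simp: ray_def)
  have "y e = 0" if "e \<notin> set (snd W)" for e
    using fun_cong[OF s, of e] that alt_cone_nonneg[OF y, of e] alt_cone_nonneg[OF z, of e]
    by (simp add: chi_def count_list_0_iff)
  then obtain \<alpha> where \<alpha>: "y = (\<lambda>e. \<alpha> * chi W e)" using alt_circuit_support_ray[OF W y] by blast
  have "0 \<le> \<alpha> * chi W (hd (snd W))" using alt_cone_nonneg[OF y] \<alpha> by metis
  then have "0 \<le> \<alpha>" using CAW_chi_hd_pos[OF alt_circuit_CAW[OF W]] by (simp add: zero_le_mult_iff)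
  then show ?thesis using \<alpha> by (auto simp: ray_def)
qed

lemma alt_circuit_spans_extreme_ray:
  assumes W: "alt_circuit W" shows "spans_extreme_ray (alt_cone V E ends col) (chi W)"
  unfolding spans_extreme_ray_def
proof (intro conjI allI impI)
  show "chi W \<in> alt_cone V E ends col" by (rule CAW_chi_in_alt_cone[OF alt_circuit_CAW[OF W]])
  show "chi W \<noteq> (\<lambda>e. 0)" using CAW_chi_hd_pos[OF alt_circuit_CAW[OF W]] by force
  fix y z assume yz: "y \<in> alt_cone V E ends col" "z \<in> alt_cone V E ends col" "(\<lambda>e. y e + z e) \<in> ray (chi W)"
  then show "y \<in> ray (chi W)" using alt_circuit_ray_summand[OF W] by blast
  have "(\<lambda>e. z e + y e) \<in> ray (chi W)" using yz(3) by (simp add: add.commute)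
  then show "z \<in> ray (chi W)" using alt_circuit_ray_summand[OF W yz(2,1)] by blast
qed

text \<open>The support of x contains an alternating circuit C. Subtracting a small multiple of
  chi C stays in the cone, so by extremality chi C lies on the ray of x.\<close>
lemma extreme_ray_alt_circuit:
  assumes ext: "spans_extreme_ray (alt_cone V E ends col) x"
  shows "\<exists>W t. alt_circuit W \<and> 0 < t \<and> x = (\<lambda>e. t * chi W e)"
proof -
  have x: "x \<in> alt_cone V E ends col" and "x \<noteq> (\<lambda>e. 0)" using ext by (auto simp: spans_extreme_ray_def)
  then obtain e where "x e \<noteq> 0" by auto
  then have "e \<in> {e\<in>E. x e > 0}" using x alt_cone_nonneg[OF x, of e] by (auto simp: alt_cone_iff)
  then have "{e\<in>E. x e > 0} \<noteq> {}" by blast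
  then obtain C where C: "alt_circuit C" "set (snd C) \<subseteq> {e\<in>E. x e > 0}"
    using alt_circuit_in_alt_extendable[OF alt_cone_support_alt_extendable[OF x]] by blast
  have CAW: "CAW V E ends col C" by (rule alt_circuit_CAW[OF C(1)])
  define L m where "L = length (snd C)" and "m = Min (x ` set (snd C))"
  have L: "0 < L" using CAW by (simp add: CAW_def L_def)
  have m: "0 < m" "\<And>e. e \<in> set (snd C) \<Longrightarrow> m \<le> x e" using C(2) CAW by (auto simp: m_def CAW_def)
  define z where "z = (\<lambda>e. m / L * chi C e)"
  have z: "z \<in> alt_cone V E ends col"
    unfolding z_def using m L by (intro alt_cone_scale CAW_chi_in_alt_cone[OF CAW]) simp
  have "z e \<le> x e" for e
  proof (cases "e \<in> set (snd C)")
    case True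
    have "chi C e \<le> L" by (simp add: chi_def L_def count_le_length)
    then have "z e \<le> m" using m(1) L by (simp add: z_def field_simps)
    then show ?thesis using m(2)[OF True] by simp
  qed (simp add: z_def chi_def alt_cone_nonneg[OF x])
  then have "(\<lambda>e. x e - z e) \<in> alt_cone V E ends col" by (rule alt_cone_diff[OF x z])
  moreover have "(\<lambda>e. (x e - z e) + z e) \<in> ray x" by (auto simp: ray_def intro: exI[of _ 1])
  ultimately have "z \<in> ray x" using ext z by (auto simp: spans_extreme_ray_def)
  then obtain t where t: "z = (\<lambda>e. t * x e)" "0 \<le> t" by (auto simp: ray_def)
  have "0 < z (hd (snd C))" using CAW_chi_hd_pos[OF CAW] m(1) L by (simp add: z_def)
  then have "0 < t" using t by (metis less_eq_real_def mult_zero_left)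
  have "x e = (m / L / t) * chi C e" for e
    using fun_cong[OF t(1), of e] \<open>0 < t\<close> L by (auto simp: z_def field_simps)
  then have "x = (\<lambda>e. (m / L / t) * chi C e)" by blast
  then show ?thesis using C(1) \<open>0 < t\<close> m(1) L by (intro exI[of _ C] exI[of _ "m / L / t"]) simp
qed

lemma alt_cone_extreme_ray_iff:
  "spans_extreme_ray (alt_cone V E ends col) x \<longleftrightarrow> (\<exists>W t. alt_circuit W \<and> 0 < t \<and> x = (\<lambda>e. t * chi W e))"
proof
  assume "\<exists>W t. alt_circuit W \<and> 0 < t \<and> x = (\<lambda>e. t * chi W e)"
  then obtain W t where W: "alt_circuit W" "0 < t" "x = (\<lambda>e. t * chi W e)" by blast
  have "(\<lambda>e. t * chi W e) \<in> alt_cone V E ends col" "(\<lambda>e. t * chi W e) \<noteq> (\<lambda>e. 0)"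
    using alt_circuit_spans_extreme_ray[OF W(1)] W(2) alt_cone_scale[of "chi W" t]
    by (auto simp: spans_extreme_ray_def fun_eq_iff)
  then show "spans_extreme_ray (alt_cone V E ends col) x"
    using alt_circuit_spans_extreme_ray[OF W(1)] W(3) ray_scale[OF W(2), of "chi W"] by (simp add: spans_extreme_ray_def)
qed (rule extreme_ray_alt_circuit)

end

theorem theorem2p2:
  fixes V :: "'v set" and E :: "'e set" and ends :: "'e \<Rightarrow> 'v set" and col :: "'e \<Rightarrow> color"
  assumes "two_colored_graph V E ends col"
  shows "(\<forall>x. spans_extreme_ray (alt_cone V E ends col) x \<longleftrightarrow>
            (\<exists>W t. (alt_cycle V E ends col W \<or> alt_bicycle V E ends col W) \<and> t > 0 \<and>
                   x = (\<lambda>e. t * chi W e)))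
       \<and> (\<forall>x \<in> alt_cone V E ends col. (\<forall>e. x e \<in> \<int>) \<longrightarrow>
            (\<exists>Ws. (\<forall>W\<in>set Ws. irreducible_CAW V E ends col W) \<and> x = (\<lambda>e. \<Sum>W\<leftarrow>Ws. chi W e)))
       \<and> (\<forall>x \<in> alt_cone V E ends col. (\<forall>e. x e \<in> {0, 1}) \<longrightarrow>
            (\<exists>Ts. (\<forall>T\<in>set Ts. irreducible_CAT V E ends col T) \<and> x = (\<lambda>e. \<Sum>T\<leftarrow>Ts. chi T e)))
       \<and> (\<forall>W. irreducible_CAW V E ends col W \<longrightarrow> (\<forall>e. chi W e \<in> {0, 1, 2}))"
proof -
  interpret bicolored_graph V E ends col by (rule bicolored_graph.intro) (rule assms)
  show ?thesis
  proof (intro conjI allI ballI impI)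
    show "spans_extreme_ray (alt_cone V E ends col) x \<longleftrightarrow>
      (\<exists>W t. (alt_cycle V E ends col W \<or> alt_bicycle V E ends col W) \<and> t > 0 \<and> x = (\<lambda>e. t * chi W e))" for x
      by (rule alt_cone_extreme_ray_iff)
  qed (use integral_alt_cone_irreducible_CAW_sum binary_alt_cone_irreducible_CAT_sum
      irreducible_CAW_chi_012 in metis)+
qed

end
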